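(* Let $N\in\mathbb{N}$; for $i=1,\ldots,N$ let $(\mathcal{X}_i,d_{\mathcal{X}_i})$ be a compact metric space and $\mu_i$ a Borel probability measure on $\mathcal{X}_i$; let $\boldsymbol{\mathcal{X}}:=\mathcal{X}_1\times\cdots\times\mathcal{X}_N$ with metric $\sum_id_{\mathcal{X}_i}$, and let $f:\boldsymbol{\mathcal{X}}\to\mathbb{R}$ be $L_f$-Lipschitz ($L_f>0$). Let finite collections $\mathcal{G}_i=\{g_{i,1},\ldots,g_{i,m_i}\}$ be given such that (BSS-a) or (BSS-b) holds; let $m:=\sum_im_i$, $\boldsymbol{g}(\boldsymbol{x})$ the vector of $g_{i,j}(x_i)$ and $\bar{\boldsymbol{g}}$ the vector of $\int g_{i,j}\,\mathrm{d}\mu_i$ (same order). Let $\boldsymbol{\mathcal{X}}^{\dagger(0)}\subseteq\boldsymbol{\mathcal{X}}$ be a finite set such that the linear program $\max\{y_0+\langle\bar{\boldsymbol{g}},\boldsymbol{y}\rangle:y_0+\langle\boldsymbol{g}(\boldsymbol{x}),\boldsymbol{y}\rangle\le f(\boldsymbol{x})\ \forall\boldsymbol{x}\in\boldsymbol{\mathcal{X}}^{\dagger(0)}\}$ has bounded superlevel sets, let $\mathtt{Oracle}$ be a global minimization oracle, and let $\epsilon_{\mathsf{LSIP}}>0$. Run Algorithm 1 with these inputs. Then: (i) Algorithm 1 terminates after finitely many iterations. (ii) $\alpha^{\mathsf{LB}}_{\mathsf{relax}}\le\text{(LSIP)}\le\alpha^{\mathsf{UB}}_{\mathsf{relax}}$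 and $\alpha^{\mathsf{UB}}_{\mathsf{relax}}-\alpha^{\mathsf{LB}}_{\mathsf{relax}}\le\epsilon_{\mathsf{LSIP}}$, where (LSIP) denotes the optimal value of $\max\{y_0+\langle\bar{\boldsymbol{g}},\boldsymbol{y}\rangle:y_0+\langle\boldsymbol{g}(\boldsymbol{x}),\boldsymbol{y}\rangle\le f(\boldsymbol{x})\ \forall\boldsymbol{x}\in\boldsymbol{\mathcal{X}}\}$. (iii) $(\hat y_0,\hat{\boldsymbol{y}})$ is an $\epsilon_{\mathsf{LSIP}}$-optimal solution of (LSIP) and $\hat y_0+\langle\bar{\boldsymbol{g}},\hat{\boldsymbol{y}}\rangle=\alpha^{\mathsf{LB}}_{\mathsf{relax}}$. (iv) $\hat{\mu}$ is an $\epsilon_{\mathsf{LSIP}}$-optimal solution of $\inf_{\mu\in\Gamma([\mu_1]_{\mathcal{G}_1},\ldots,[\mu_N]_{\mathcal{G}_N})}\int_{\boldsymbol{\mathcal{X}}}f\,\mathrm{d}\mu$ and $\int_{\boldsymbol{\mathcal{X}}}f\,\mathrm{d}\hat{\mu}=\alpha^{\mathsf{UB}}_{\mathsf{relax}}$.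
   Context: Conditions (with $\boldsymbol{g}_i(x_i):=(g_{i,1}(x_i),\ldots,g_{i,m_i}(x_i))^\top$): (BSS-a) for each $i$, $\operatorname{supp}(\mu_i)=\mathcal{X}_i$, each $g_{i,j}$ is continuous, and there exist $x_{i,1},\ldots,x_{i,m_i+1}\in\mathcal{X}_i$ with $\boldsymbol{g}_i(x_{i,1}),\ldots,\boldsymbol{g}_i(x_{i,m_i+1})$ affinely independent. (BSS-b) for each $i$, $\mathcal{X}_i$ is a compact subset of a Euclidean space with norm-induced metric, $\mathfrak{C}_i$ is a bounded polyhedral cover of $\mathcal{X}_i$ (finite collection of bounded polyhedra whose union contains $\mathcal{X}_i$, any two intersecting in a common face) with vertex set $V(\mathfrak{C}_i)\subseteq\mathcal{X}_i$, $\{g_{i,0},\ldots,g_{i,m_i}\}$ is a vertex interpolation function set for $\mathfrak{C}_i$ (non-negative functions indexed by the vertices with $g_{\boldsymbol{v}}(\boldsymbol{v}')=\mathbf{1}_{\{\boldsymbol{v}=\boldsymbol{v}'\}}$, summing to $1$ over the vertices of each face on that face, and vanishing on each face not having $\boldsymbol{v}$ as a vertex) with $\int g_{i,j}\,\mathrm{d}\mu_i>0$ for all $j$, and $\mathcal{G}_i=\{g_{i,1},\ldots,g_{i,m_i}\}$. Oracle: for $\boldsymbol{y}\in\mathbb{R}^m$ returns $(\boldsymbol{x}^\star,\beta^\star)$, $\boldsymbol{x}^\star$ a minimizer of $f(\boldsymbol{x})-\langle\boldsymbol{g}(\boldsymbol{x}),\boldsymbol{y}\rangle$ over $\boldsymbol{\mathcal{X}}$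 and $\beta^\star$ the minimal value. Algorithm 1: for $r=0,1,\ldots$: solve the LP $\alpha^{(r)}:=\max\{y_0+\langle\bar{\boldsymbol{g}},\boldsymbol{y}\rangle:y_0+\langle\boldsymbol{g}(\boldsymbol{x}),\boldsymbol{y}\rangle\le f(\boldsymbol{x})\ \forall\boldsymbol{x}\in\boldsymbol{\mathcal{X}}^{\dagger(r)}\}$, obtaining an optimizer $(y^{(r)}_0,\boldsymbol{y}^{(r)})$ and an optimizer $(\mu^{(r)}_{\boldsymbol{x}})_{\boldsymbol{x}\in\boldsymbol{\mathcal{X}}^{\dagger(r)}}$ of the dual LP $\min\{\sum_{\boldsymbol{x}}f(\boldsymbol{x})\mu_{\boldsymbol{x}}:\sum_{\boldsymbol{x}}\mu_{\boldsymbol{x}}=1,\ \sum_{\boldsymbol{x}}\boldsymbol{g}(\boldsymbol{x})\mu_{\boldsymbol{x}}=\bar{\boldsymbol{g}},\ \mu_{\boldsymbol{x}}\ge0\}$; call $\mathtt{Oracle}(\boldsymbol{y}^{(r)})$ obtaining $(\boldsymbol{x}^\star,s^{(r)})$; if $y^{(r)}_0-s^{(r)}\le\epsilon_{\mathsf{LSIP}}$, stop; else choose a finite $\boldsymbol{\mathcal{X}}^\star\subset\boldsymbol{\mathcal{X}}$ with $\boldsymbol{x}^\star\in\boldsymbol{\mathcal{X}}^\star$ and set $\boldsymbol{\mathcal{X}}^{\dagger(r+1)}:=\boldsymbol{\mathcal{X}}^{\dagger(r)}\cup\boldsymbol{\mathcal{X}}^\star$. At the terminal $r$, output $\alpha^{\mathsf{UB}}_{\mathsf{relax}}:=\alpha^{(r)}$,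 $\alpha^{\mathsf{LB}}_{\mathsf{relax}}:=\alpha^{(r)}-y^{(r)}_0+s^{(r)}$, $\hat y_0:=s^{(r)}$, $\hat{\boldsymbol{y}}:=\boldsymbol{y}^{(r)}$, $\hat{\mu}:=\sum_{\boldsymbol{x}\in\boldsymbol{\mathcal{X}}^{\dagger(r)}}\mu^{(r)}_{\boldsymbol{x}}\delta_{\boldsymbol{x}}$. $\Gamma([\mu_1]_{\mathcal{G}_1},\ldots,[\mu_N]_{\mathcal{G}_N})$: probability measures on $\boldsymbol{\mathcal{X}}$ whose $i$-th marginal $\nu$ satisfies $\int g\,\mathrm{d}\nu=\int g\,\mathrm{d}\mu_i$ for all $g\in\mathcal{G}_i$, for all $i$. An $\epsilon$-optimal solution is a feasible solution whose objective is within $\epsilon$ of the optimal value. *)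

theory Defs
  imports "HOL-Probability.Probability"
begin

definition metric_borel :: "'a set \<Rightarrow> ('a \<Rightarrow> 'a \<Rightarrow> real) \<Rightarrow> 'a measure" where
  "metric_borel X d = sigma X {U. openin (Metric_space.mtopology X d) U}"

definition metric_support :: "'a set \<Rightarrow> ('a \<Rightarrow> 'a \<Rightarrow> real) \<Rightarrow> 'a measure \<Rightarrow> 'a set" where
  "metric_support X d M = {x \<in> X. \<forall>e>0. emeasure M (Metric_space.mball X d x e) > 0}"

definition is_norm :: "('a::real_vector \<Rightarrow> real) \<Rightarrow> bool" where
  "is_norm nrm \<longleftrightarrow> (\<forall>x. nrm x = 0 \<longleftrightarrow> x = 0) \<and> (\<forall>c x. nrm (c *\<^sub>R x) = \<bar>c\<bar> * nrm x)
      \<and> (\<forall>x y. nrm (x + y) \<le> nrm x + nrm y)"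

text \<open>Affine independence of the family of points p 0, ..., p k' (k' < K) of R^m, where
  a point p k' of R^m is given by its coordinates p k' j, j = 1..m.\<close>
definition aff_indep_family :: "nat \<Rightarrow> nat \<Rightarrow> (nat \<Rightarrow> nat \<Rightarrow> real) \<Rightarrow> bool" where
  "aff_indep_family m K p \<longleftrightarrow>
     (\<forall>c::nat \<Rightarrow> real. (\<Sum>k<K. c k) = 0 \<and> (\<forall>j\<in>{1..m}. (\<Sum>k<K. c k * p k j) = 0)
        \<longrightarrow> (\<forall>k<K. c k = 0))"

definition BSS_a :: "'a set \<Rightarrow> ('a \<Rightarrow> 'a \<Rightarrow> real) \<Rightarrow> 'a measure \<Rightarrow> nat \<Rightarrow> (nat \<Rightarrow> 'a \<Rightarrow> real) \<Rightarrow> bool" where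
  "BSS_a X d M m g \<longleftrightarrow>
     metric_support X d M = X \<and>
     (\<forall>j\<in>{1..m}. continuous_map (Metric_space.mtopology X d) euclideanreal (g j)) \<and>
     (\<exists>xs::nat \<Rightarrow> 'a. (\<forall>k<m+1. xs k \<in> X) \<and> aff_indep_family m (m+1) (\<lambda>k j. g j (xs k)))"

definition bounded_polyhedral_cover :: "'a::euclidean_space set \<Rightarrow> 'a set set \<Rightarrow> bool" where
  "bounded_polyhedral_cover X C \<longleftrightarrow> finite C \<and> (\<forall>P\<in>C. polyhedron P \<and> bounded P) \<and> X \<subseteq> \<Union>C \<and>
     (\<forall>P\<in>C. \<forall>Q\<in>C. (P \<inter> Q) face_of P \<and> (P \<inter> Q) face_of Q)"

definition cover_faces :: "'a::euclidean_space set set \<Rightarrow> 'a set set" where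
  "cover_faces C = {F. \<exists>P\<in>C. F face_of P}"

definition face_vertices :: "'a::euclidean_space set \<Rightarrow> 'a set" where
  "face_vertices F = {v. v extreme_point_of F}"

definition cover_vertices :: "'a::euclidean_space set set \<Rightarrow> 'a set" where
  "cover_vertices C = (\<Union>P\<in>C. face_vertices P)"

definition vertex_interpolation_set ::
  "'a::euclidean_space set \<Rightarrow> 'a set set \<Rightarrow> nat \<Rightarrow> (nat \<Rightarrow> 'a \<Rightarrow> real) \<Rightarrow> bool" where
  "vertex_interpolation_set X C m g \<longleftrightarrow>
     (\<exists>vtx. bij_betw vtx {0..m} (cover_vertices C) \<and>
        (\<forall>j\<in>{0..m}. \<forall>x\<in>X. g j x \<ge> 0) \<and>
        (\<forall>j\<in>{0..m}. \<forall>j'\<in>{0..m}. g j (vtx j') = (if j = j' then 1 else 0)) \<and>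
        (\<forall>F\<in>cover_faces C. \<forall>x\<in>F \<inter> X. (\<Sum>j\<in>{j\<in>{0..m}. vtx j \<in> face_vertices F}. g j x) = 1) \<and>
        (\<forall>F\<in>cover_faces C. \<forall>j\<in>{0..m}. vtx j \<notin> face_vertices F \<longrightarrow> (\<forall>x\<in>F \<inter> X. g j x = 0)))"

definition BSS_b :: "'a::euclidean_space set \<Rightarrow> ('a \<Rightarrow> 'a \<Rightarrow> real) \<Rightarrow> 'a measure \<Rightarrow> nat \<Rightarrow> (nat \<Rightarrow> 'a \<Rightarrow> real) \<Rightarrow> bool" where
  "BSS_b X d M m g \<longleftrightarrow>
     compact X \<and> (\<exists>nrm. is_norm nrm \<and> (\<forall>x\<in>X. \<forall>y\<in>X. d x y = nrm (x - y))) \<and>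
     (\<exists>C. bounded_polyhedral_cover X C \<and> cover_vertices C \<subseteq> X \<and>
          vertex_interpolation_set X C m g) \<and>
     (\<forall>j\<in>{0..m}. integral\<^sup>L M (g j) > 0)"

text \<open>Index set of the moment functions: pairs (i, j) with i < N (components indexed 0..N-1)
  and j = 1..m i.  A vector y in R^m is represented as a function on this index set.\<close>
definition Jset :: "nat \<Rightarrow> (nat \<Rightarrow> nat) \<Rightarrow> (nat \<times> nat) set" where
  "Jset N m = (SIGMA i:{..<N}. {1..m i})"

definition gdot :: "nat \<Rightarrow> (nat \<Rightarrow> nat) \<Rightarrow> (nat \<Rightarrow> nat \<Rightarrow> 'a \<Rightarrow> real) \<Rightarrow> (nat \<Rightarrow> 'a) \<Rightarrow> (nat \<times> nat \<Rightarrow> real) \<Rightarrow> real" where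
  "gdot N m g x y = (\<Sum>(i,j)\<in>Jset N m. g i j (x i) * y (i,j))"

definition gbar :: "(nat \<Rightarrow> 'a measure) \<Rightarrow> (nat \<Rightarrow> nat \<Rightarrow> 'a \<Rightarrow> real) \<Rightarrow> nat \<Rightarrow> nat \<Rightarrow> real" where
  "gbar \<mu> g i j = integral\<^sup>L (\<mu> i) (g i j)"

definition lp_obj :: "nat \<Rightarrow> (nat \<Rightarrow> nat) \<Rightarrow> (nat \<Rightarrow> 'a measure) \<Rightarrow> (nat \<Rightarrow> nat \<Rightarrow> 'a \<Rightarrow> real) \<Rightarrow> real \<Rightarrow> (nat \<times> nat \<Rightarrow> real) \<Rightarrow> real" where
  "lp_obj N m \<mu> g y0 y = y0 + (\<Sum>(i,j)\<in>Jset N m. gbar \<mu> g i j * y (i,j))"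

definition lp_feasible :: "nat \<Rightarrow> (nat \<Rightarrow> nat) \<Rightarrow> (nat \<Rightarrow> nat \<Rightarrow> 'a \<Rightarrow> real) \<Rightarrow> ((nat \<Rightarrow> 'a) \<Rightarrow> real) \<Rightarrow> (nat \<Rightarrow> 'a) set \<Rightarrow> real \<Rightarrow> (nat \<times> nat \<Rightarrow> real) \<Rightarrow> bool" where
  "lp_feasible N m g f S y0 y \<longleftrightarrow> (\<forall>x\<in>S. y0 + gdot N m g x y \<le> f x)"

definition lp_optimizer where
  "lp_optimizer N m \<mu> g f S y0 y \<longleftrightarrow> lp_feasible N m g f S y0 y \<and>
     (\<forall>z0 z. lp_feasible N m g f S z0 z \<longrightarrow> lp_obj N m \<mu> g z0 z \<le> lp_obj N m \<mu> g y0 y)"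

definition lp_value where
  "lp_value N m \<mu> g f S = Sup {lp_obj N m \<mu> g y0 y | y0 y. lp_feasible N m g f S y0 y}"

definition lp_bounded_superlevel where
  "lp_bounded_superlevel N m \<mu> g f S \<longleftrightarrow>
     (\<forall>c. \<exists>B. \<forall>y0 y. lp_feasible N m g f S y0 y \<and> lp_obj N m \<mu> g y0 y \<ge> c \<longrightarrow>
          \<bar>y0\<bar> \<le> B \<and> (\<forall>p\<in>Jset N m. \<bar>y p\<bar> \<le> B))"

definition dual_feasible where
  "dual_feasible N m \<mu> g S (w :: (nat \<Rightarrow> 'a) \<Rightarrow> real) \<longleftrightarrow> (\<forall>x\<in>S. w x \<ge> 0) \<and> (\<Sum>x\<in>S. w x) = 1 \<and>
     (\<forall>(i,j)\<in>Jset N m. (\<Sum>x\<in>S. g i j (x i) * w x) = gbar \<mu> g i j)"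

definition dual_optimizer where
  "dual_optimizer N m \<mu> g f S w \<longleftrightarrow> dual_feasible N m \<mu> g S w \<and>
     (\<forall>w'. dual_feasible N m \<mu> g S w' \<longrightarrow> (\<Sum>x\<in>S. f x * w x) \<le> (\<Sum>x\<in>S. f x * w' x))"

definition Gamma :: "nat \<Rightarrow> (nat \<Rightarrow> nat) \<Rightarrow> (nat \<Rightarrow> 'a measure) \<Rightarrow> (nat \<Rightarrow> nat \<Rightarrow> 'a \<Rightarrow> real) \<Rightarrow> (nat \<Rightarrow> 'a) measure set" where
  "Gamma N m \<mu> g = {\<nu>. prob_space \<nu> \<and> sets \<nu> = sets (PiM {..<N} \<mu>) \<and>
     (\<forall>i<N. \<forall>j\<in>{1..m i}. integral\<^sup>L (distr \<nu> (\<mu> i) (\<lambda>x. x i)) (g i j) = integral\<^sup>L (\<mu> i) (g i j))}"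

definition mot_value where
  "mot_value N m \<mu> g f = Inf ((\<lambda>\<nu>. integral\<^sup>L \<nu> f) ` Gamma N m \<mu> g)"

definition discrete_measure :: "'b measure \<Rightarrow> 'b set \<Rightarrow> ('b \<Rightarrow> real) \<Rightarrow> 'b measure" where
  "discrete_measure M S w = measure_of (space M) (sets M) (\<lambda>A. \<Sum>x\<in>S \<inter> A. ennreal (w x))"

end

theory Submission
  imports Defs
begin

(* While the algorithm runs, every iterate (y0 r, y r) is optimal for an LP whose constraints contain
   those of the initial LP, and the point (min f, 0) is feasible for all of them; by the bounded
   superlevel hypothesis the iterates therefore stay in a bounded set.  The oracle point of iteration r
   violates (y0 r, y r) by more than epsilon but is a constraint of every later LP, so, the moment
   functions being bounded, any two iterates are a fixed distance apart.  A pigeonhole argument on a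
   finite grid shows that this cannot happen infinitely often.

   At termination the oracle value s makes (s, y) feasible for the semi-infinite LP, whose value is
   below that of the finite relaxation.  By LP strong duality (Farkas' lemma, proved by Fourier-Motzkin
   elimination) the dual optimizer, read as a discrete measure, lies in Gamma and costs exactly the
   relaxed value, while integrating the constraint of a feasible (y0, y) against a measure in Gamma
   shows that its cost is at least y0 + <gbar, y>.  Lipschitz continuity of f and (BSS-a)/(BSS-b)
   provide the measurability and boundedness behind these integrals. *)

section \<open>Farkas' lemma and duality of finite linear programs\<close>

(* A pair (a, b) stands for the linear constraint  sum_k a k * z k <= b. *)
definition nonneg_combination :: "(('k \<Rightarrow> real) \<times> real) set \<Rightarrow> ('k \<Rightarrow> real) \<times> real \<Rightarrow> bool" where
  "nonneg_combination C c \<longleftrightarrow> (\<exists>l. (\<forall>c'\<in>C. 0 \<le> l c') \<and>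
     fst c = (\<lambda>k. \<Sum>c'\<in>C. l c' * fst c' k) \<and> snd c = (\<Sum>c'\<in>C. l c' * snd c'))"

lemma nonneg_combination_two:
  fixes C :: "(('k \<Rightarrow> real) \<times> real) set"
  assumes "finite C" "p \<in> C" "n \<in> C" "0 \<le> a" "0 \<le> b"
  shows "nonneg_combination C ((\<lambda>k. a * fst p k + b * fst n k), a * snd p + b * snd n)"
proof -
  define l where "l c = (if c = p then a else 0) + (if c = n then b else 0)" for c
  have "(\<Sum>c\<in>C. l c * h c) = a * h p + b * h n" for h :: "('k \<Rightarrow> real) \<times> real \<Rightarrow> real"
  proof -
    have "(\<Sum>c\<in>C. l c * h c) = (\<Sum>c\<in>C. if c = p then a * h c else 0) + (\<Sum>c\<in>C. if c = n then b * h c else 0)"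
      unfolding sum.distrib[symmetric] by (rule sum.cong) (auto simp: l_def algebra_simps)
    then show ?thesis using assms(1-3) by (simp add: sum.delta')
  qed
  moreover have "\<forall>c\<in>C. 0 \<le> l c" using assms(4,5) by (simp add: l_def)
  ultimately show ?thesis
    unfolding nonneg_combination_def by (intro exI[of _ l]) auto
qed

lemma nonneg_combination_member:
  assumes "finite C" "c \<in> C"
  shows "nonneg_combination C c"
  using nonneg_combination_two[OF assms assms(2), of 1 0] by simp

lemma sum_composed_weights:
  fixes h :: "'c \<Rightarrow> real"
  assumes "\<And>c'. c' \<in> C' \<Longrightarrow> h c' = (\<Sum>c\<in>C. coef c' c * h c)"
  shows "(\<Sum>c\<in>C. (\<Sum>c'\<in>C'. l c' * coef c' c) * h c) = (\<Sum>c'\<in>C'. l c' * h c')"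
proof -
  have "(\<Sum>c\<in>C. (\<Sum>c'\<in>C'. l c' * coef c' c) * h c) = (\<Sum>c\<in>C. \<Sum>c'\<in>C'. l c' * (coef c' c * h c))"
    by (simp only: sum_distrib_right mult.assoc)
  also have "\<dots> = (\<Sum>c'\<in>C'. l c' * (\<Sum>c\<in>C. coef c' c * h c))"
    unfolding sum_distrib_left by (rule sum.swap)
  also have "\<dots> = (\<Sum>c'\<in>C'. l c' * h c')" using assms by simp
  finally show ?thesis .
qed

lemma nonneg_combination_trans:
  assumes "\<forall>c'\<in>C'. nonneg_combination C c'" "nonneg_combination C' c"
  shows "nonneg_combination C c"
proof -
  have "\<forall>c'\<in>C'. \<exists>l. (\<forall>c''\<in>C. 0 \<le> l c'') \<and>
      fst c' = (\<lambda>k. \<Sum>c''\<in>C. l c'' * fst c'' k) \<and> snd c' = (\<Sum>c''\<in>C. l c'' * snd c'')"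
    using assms(1) unfolding nonneg_combination_def .
  from bchoice[OF this] obtain coef where coef: "\<forall>c'\<in>C'. (\<forall>c''\<in>C. 0 \<le> coef c' c'') \<and>
      fst c' = (\<lambda>k. \<Sum>c''\<in>C. coef c' c'' * fst c'' k) \<and> snd c' = (\<Sum>c''\<in>C. coef c' c'' * snd c'')" ..
  obtain l where l: "\<forall>c'\<in>C'. 0 \<le> l c'" "fst c = (\<lambda>k. \<Sum>c'\<in>C'. l c' * fst c' k)"
      "snd c = (\<Sum>c'\<in>C'. l c' * snd c')"
    using assms(2) unfolding nonneg_combination_def by auto
  have "fst c k = (\<Sum>c''\<in>C. (\<Sum>c'\<in>C'. l c' * coef c' c'') * fst c'' k)" for k
  proof -
    have "fst c' k = (\<Sum>c''\<in>C. coef c' c'' * fst c'' k)" if "c' \<in> C'" for c'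
    proof -
      from coef[rule_format, OF that] have "fst c' = (\<lambda>k. \<Sum>c''\<in>C. coef c' c'' * fst c'' k)" by blast
      then show ?thesis by simp
    qed
    then show ?thesis using l(2) sum_composed_weights[of C' "\<lambda>c. fst c k"] by simp
  qed
  moreover have "snd c = (\<Sum>c''\<in>C. (\<Sum>c'\<in>C'. l c' * coef c' c'') * snd c'')"
  proof -
    have "snd c' = (\<Sum>c''\<in>C. coef c' c'' * snd c'')" if "c' \<in> C'" for c'
      using coef[rule_format, OF that] by blast
    then show ?thesis using l(3) sum_composed_weights[of C' snd] by simp
  qed
  moreover have "0 \<le> (\<Sum>c'\<in>C'. l c' * coef c' c'')" if "c'' \<in> C" for c''
  proof -
    have "0 \<le> coef c' c''" if "c' \<in> C'" for c' using coef[rule_format, OF that] \<open>c'' \<in> C\<close> by blast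
    then show ?thesis using l(1) by (simp add: sum_nonneg)
  qed
  ultimately show ?thesis unfolding nonneg_combination_def
    by (intro exI[of _ "\<lambda>c''. \<Sum>c'\<in>C'. l c' * coef c' c''"] conjI ballI ext) simp_all
qed

lemma exists_between_finite:
  fixes A B :: "real set"
  assumes "finite A" "finite B" "\<And>a b. a \<in> A \<Longrightarrow> b \<in> B \<Longrightarrow> a \<le> b"
  shows "\<exists>t. (\<forall>a\<in>A. a \<le> t) \<and> (\<forall>b\<in>B. t \<le> b)"
proof (cases "A = {}")
  case True
  then show ?thesis using assms by (intro exI[of _ "if B = {} then 0 else Min B"]) auto
next
  case False
  then show ?thesis using assms by (intro exI[of _ "Max A"]) auto
qed

definition fourier_motzkin_elim ::
    "'k \<Rightarrow> (('k \<Rightarrow> real) \<times> real) set \<Rightarrow> (('k \<Rightarrow> real) \<times> real) set" where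
  "fourier_motzkin_elim k0 C = {c \<in> C. fst c k0 = 0} \<union>
     (\<lambda>(p, n). ((\<lambda>k. - fst n k0 * fst p k + fst p k0 * fst n k), - fst n k0 * snd p + fst p k0 * snd n))
       ` ({p \<in> C. 0 < fst p k0} \<times> {n \<in> C. fst n k0 < 0})"

lemma finite_fourier_motzkin_elim: "finite C \<Longrightarrow> finite (fourier_motzkin_elim k0 C)"
  by (simp add: fourier_motzkin_elim_def)

lemma fourier_motzkin_elim_eliminates: "c \<in> fourier_motzkin_elim k0 C \<Longrightarrow> fst c k0 = 0"
  by (auto simp: fourier_motzkin_elim_def)

lemma fourier_motzkin_elim_nonneg_combination:
  assumes "finite C" "c \<in> fourier_motzkin_elim k0 C"
  shows "nonneg_combination C c"
proof -
  from assms(2) consider "c \<in> C"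
    | p n where "p \<in> C" "n \<in> C" "0 < fst p k0" "fst n k0 < 0"
        "c = ((\<lambda>k. - fst n k0 * fst p k + fst p k0 * fst n k), - fst n k0 * snd p + fst p k0 * snd n)"
    unfolding fourier_motzkin_elim_def by auto
  then show ?thesis
  proof cases
    case 1
    then show ?thesis using nonneg_combination_member[OF assms(1)] by blast
  next
    case (2 p n)
    then show ?thesis using nonneg_combination_two[OF assms(1) 2(1,2), of "- fst n k0" "fst p k0"] by simp
  qed
qed

lemma fourier_motzkin_elim_feasible:
  assumes "finite C" "finite K" "k0 \<notin> K"
    and feasible: "\<forall>c\<in>fourier_motzkin_elim k0 C. (\<Sum>k\<in>K. fst c k * z k) \<le> snd c"
  shows "\<exists>t. \<forall>c\<in>C. (\<Sum>k\<in>insert k0 K. fst c k * (z(k0 := t)) k) \<le> snd c"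
proof -
  define P where "P = {p \<in> C. 0 < fst p k0}"
  define Q where "Q = {n \<in> C. fst n k0 < 0}"
  define bound where "bound c = (snd c - (\<Sum>k\<in>K. fst c k * z k)) / fst c k0" for c
  have bounds_ordered: "bound n \<le> bound p" if "p \<in> P" "n \<in> Q" for p n
  proof -
    have p0: "0 < fst p k0" and n0: "fst n k0 < 0" using that by (auto simp: P_def Q_def)
    have "((\<lambda>k. - fst n k0 * fst p k + fst p k0 * fst n k), - fst n k0 * snd p + fst p k0 * snd n)
        \<in> fourier_motzkin_elim k0 C"
      using that unfolding fourier_motzkin_elim_def P_def Q_def by (intro UnI2 rev_image_eqI[of "(p, n)"]) auto
    with feasible have "(\<Sum>k\<in>K. (- fst n k0 * fst p k + fst p k0 * fst n k) * z k)
        \<le> - fst n k0 * snd p + fst p k0 * snd n" by auto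
    moreover have "(\<Sum>k\<in>K. (- fst n k0 * fst p k + fst p k0 * fst n k) * z k)
        = - fst n k0 * (\<Sum>k\<in>K. fst p k * z k) + fst p k0 * (\<Sum>k\<in>K. fst n k * z k)"
      unfolding sum_distrib_left sum.distrib[symmetric] by (intro sum.cong) (simp_all add: algebra_simps)
    ultimately show ?thesis
      using p0 n0 unfolding bound_def by (simp add: divide_le_eq le_divide_eq field_simps)
  qed
  have "\<exists>t. (\<forall>b\<in>bound ` Q. b \<le> t) \<and> (\<forall>b\<in>bound ` P. t \<le> b)"
    using assms(1) bounds_ordered by (intro exists_between_finite) (auto simp: P_def Q_def)
  then obtain t where t: "\<forall>n\<in>Q. bound n \<le> t" "\<forall>p\<in>P. t \<le> bound p" by auto
  have "(\<Sum>k\<in>insert k0 K. fst c k * (z(k0 := t)) k) \<le> snd c" if "c \<in> C" for c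
  proof -
    have "(\<Sum>k\<in>insert k0 K. fst c k * (z(k0 := t)) k) = fst c k0 * t + (\<Sum>k\<in>K. fst c k * z k)"
      using assms(2,3) by (simp add: sum.insert) (intro sum.cong, auto)
    moreover consider "fst c k0 = 0" | "0 < fst c k0" | "fst c k0 < 0" by linarith
    then have "fst c k0 * t + (\<Sum>k\<in>K. fst c k * z k) \<le> snd c"
    proof cases
      case 1
      then show ?thesis using feasible that by (auto simp: fourier_motzkin_elim_def)
    next
      case 2
      moreover have "t \<le> bound c" using t(2) that 2 unfolding P_def by blast
      ultimately show ?thesis by (simp add: bound_def le_divide_eq algebra_simps)
    next
      case 3
      moreover have "bound c \<le> t" using t(1) that 3 unfolding Q_def by blast
      ultimately show ?thesis by (simp add: bound_def divide_le_eq algebra_simps)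
    qed
    ultimately show ?thesis by simp
  qed
  then show ?thesis by blast
qed

lemma farkas_constraint_set:
  assumes "finite K" "finite C" "\<nexists>z. \<forall>c\<in>C. (\<Sum>k\<in>K. fst c k * z k) \<le> snd c"
  shows "\<exists>a b. nonneg_combination C (a, b) \<and> (\<forall>k\<in>K. a k = 0) \<and> b < 0"
  using assms
proof (induction K arbitrary: C rule: finite_induct)
  case empty
  then obtain c where "c \<in> C" "snd c < 0" by force
  moreover from \<open>c \<in> C\<close> have "nonneg_combination C (fst c, snd c)"
    using nonneg_combination_member[OF empty.prems(1)] by simp
  ultimately show ?case by (metis empty_iff prod.collapse)
next
  case (insert k0 K)
  let ?C' = "fourier_motzkin_elim k0 C"
  have "\<nexists>z. \<forall>c\<in>?C'. (\<Sum>k\<in>K. fst c k * z k) \<le> snd c"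
    using fourier_motzkin_elim_feasible[OF insert.prems(1) insert.hyps] insert.prems(2) by blast
  then obtain a b where ab: "nonneg_combination ?C' (a, b)" "\<forall>k\<in>K. a k = 0" "b < 0"
    using insert.IH finite_fourier_motzkin_elim[OF insert.prems(1)] by blast
  have "a k0 = 0"
    using ab(1) unfolding nonneg_combination_def
    by (auto intro!: sum.neutral dest: fourier_motzkin_elim_eliminates)
  moreover have "nonneg_combination C (a, b)"
    using nonneg_combination_trans[OF _ ab(1)]
      fourier_motzkin_elim_nonneg_combination[OF insert.prems(1)] by blast
  ultimately show ?case using ab(2,3) by auto
qed

lemma sum_fiber_average:
  assumes "finite I"
  shows "(\<Sum>i\<in>I. u (h i) / real (card {j \<in> I. h j = h i}) * v (h i)) = (\<Sum>r\<in>h ` I. u r * v r)"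
proof -
  have "(\<Sum>i\<in>I. u (h i) / real (card {j \<in> I. h j = h i}) * v (h i))
      = (\<Sum>r\<in>h ` I. \<Sum>i\<in>{j \<in> I. h j = r}. u (h i) / real (card {j \<in> I. h j = h i}) * v (h i))"
    by (rule sum.image_gen[OF assms])
  also have "\<dots> = (\<Sum>r\<in>h ` I. u r * v r)"
  proof (rule sum.cong[OF refl])
    fix r assume "r \<in> h ` I"
    then have "card {j \<in> I. h j = r} \<noteq> 0" using assms by auto
    moreover have "(\<Sum>i\<in>{j \<in> I. h j = r}. u (h i) / real (card {j \<in> I. h j = h i}) * v (h i))
        = (\<Sum>i\<in>{j \<in> I. h j = r}. u r / real (card {j \<in> I. h j = r}) * v r)"
      by (rule sum.cong) auto
    ultimately show "(\<Sum>i\<in>{j \<in> I. h j = r}. u (h i) / real (card {j \<in> I. h j = h i}) * v (h i))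
        = u r * v r" by simp
  qed
  finally show ?thesis .
qed

lemma farkas_lemma:
  fixes A :: "'i \<Rightarrow> 'k \<Rightarrow> real" and b :: "'i \<Rightarrow> real"
  assumes "finite K" "finite I" "\<nexists>z. \<forall>i\<in>I. (\<Sum>k\<in>K. A i k * z k) \<le> b i"
  shows "\<exists>l. (\<forall>i\<in>I. 0 \<le> l i) \<and> (\<forall>k\<in>K. (\<Sum>i\<in>I. l i * A i k) = 0) \<and> (\<Sum>i\<in>I. l i * b i) < 0"
proof -
  define row where "row i = (A i, b i)" for i
  have "\<nexists>z. \<forall>c\<in>row ` I. (\<Sum>k\<in>K. fst c k * z k) \<le> snd c"
    using assms(3) by (auto simp: row_def)
  then obtain a c where "nonneg_combination (row ` I) (a, c)" "\<forall>k\<in>K. a k = 0" "c < 0"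
    using farkas_constraint_set[OF assms(1)] assms(2) by blast
  then obtain u where u: "\<forall>r\<in>row ` I. 0 \<le> u r" "\<forall>k\<in>K. (\<Sum>r\<in>row ` I. u r * fst r k) = 0"
      "(\<Sum>r\<in>row ` I. u r * snd r) < 0"
    unfolding nonneg_combination_def by auto
  define l where "l i = u (row i) / real (card {j \<in> I. row j = row i})" for i
  have average: "(\<Sum>i\<in>I. l i * v (row i)) = (\<Sum>r\<in>row ` I. u r * v r)" for v
    unfolding l_def by (rule sum_fiber_average[OF assms(2)])
  show ?thesis
  proof (intro exI[of _ l] conjI ballI)
    show "0 \<le> l i" if "i \<in> I" for i using u(1) that by (simp add: l_def)
    show "(\<Sum>i\<in>I. l i * A i k) = 0" if "k \<in> K" for k
      using average[of "\<lambda>r. fst r k"] u(2) that by (simp add: row_def)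
    show "(\<Sum>i\<in>I. l i * b i) < 0" using average[of snd] u(3) by (simp add: row_def)
  qed
qed

lemma lp_weak_duality:
  fixes A :: "'x \<Rightarrow> 'k \<Rightarrow> real"
  assumes "\<forall>x\<in>S. (\<Sum>k\<in>K. A x k * z k) \<le> b x"
    and "\<forall>x\<in>S. 0 \<le> w x" "\<forall>k\<in>K. (\<Sum>x\<in>S. A x k * w x) = c k"
  shows "(\<Sum>k\<in>K. c k * z k) \<le> (\<Sum>x\<in>S. b x * w x)"
proof -
  have "(\<Sum>k\<in>K. c k * z k) = (\<Sum>k\<in>K. (\<Sum>x\<in>S. A x k * w x) * z k)"
    using assms(3) by (intro sum.cong) simp_all
  also have "\<dots> = (\<Sum>x\<in>S. w x * (\<Sum>k\<in>K. A x k * z k))"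
    unfolding sum_distrib_left sum_distrib_right by (subst sum.swap) (simp add: mult_ac)
  also have "\<dots> \<le> (\<Sum>x\<in>S. w x * b x)"
    using assms(1,2) by (intro sum_mono mult_left_mono) auto
  finally show ?thesis by (simp add: mult.commute)
qed

lemma lp_dual_nearly_optimal:
  fixes A :: "'x \<Rightarrow> 'k \<Rightarrow> real"
  assumes "finite S" "finite K" "0 < \<delta>"
    and z_feasible: "\<forall>x\<in>S. (\<Sum>k\<in>K. A x k * z k) \<le> b x"
    and z_optimal: "\<And>z'. \<forall>x\<in>S. (\<Sum>k\<in>K. A x k * z' k) \<le> b x \<Longrightarrow>
                      (\<Sum>k\<in>K. c k * z' k) \<le> (\<Sum>k\<in>K. c k * z k)"
  shows "\<exists>w. (\<forall>x\<in>S. 0 \<le> w x) \<and> (\<forall>k\<in>K. (\<Sum>x\<in>S. A x k * w x) = c k) \<and>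
             (\<Sum>x\<in>S. b x * w x) < (\<Sum>k\<in>K. c k * z k) + \<delta>"
proof -
  let ?opt = "\<Sum>k\<in>K. c k * z k"
  let ?I = "insert None (Some ` S)"
  have sum_I: "(\<Sum>i\<in>?I. F i) = F None + (\<Sum>x\<in>S. F (Some x))" for F :: "'x option \<Rightarrow> real"
    using assms(1) by (simp add: sum.reindex)
  \<comment> \<open>Adding the cut \<open>c \<bullet> z \<ge> opt + \<delta>\<close> as constraint None makes the primal infeasible.\<close>
  define A' where "A' i = (case i of None \<Rightarrow> (\<lambda>k. - c k) | Some x \<Rightarrow> A x)" for i
  define b' where "b' i = (case i of None \<Rightarrow> - (?opt + \<delta>) | Some x \<Rightarrow> b x)" for i
  have infeasible: "\<nexists>z'. \<forall>i\<in>?I. (\<Sum>k\<in>K. A' i k * z' k) \<le> b' i"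
  proof
    assume "\<exists>z'. \<forall>i\<in>?I. (\<Sum>k\<in>K. A' i k * z' k) \<le> b' i"
    then obtain z' where z': "\<forall>i\<in>?I. (\<Sum>k\<in>K. A' i k * z' k) \<le> b' i" ..
    then have "\<forall>x\<in>S. (\<Sum>k\<in>K. A x k * z' k) \<le> b x" by (simp add: A'_def b'_def)
    then have "(\<Sum>k\<in>K. c k * z' k) \<le> ?opt" by (rule z_optimal)
    moreover from z' have "(\<Sum>k\<in>K. - c k * z' k) \<le> - (?opt + \<delta>)" by (simp add: A'_def b'_def)
    ultimately show False using \<open>0 < \<delta>\<close> by (simp add: sum_negf)
  qed
  have "finite ?I" using assms(1) by simp
  from farkas_lemma[OF assms(2) this infeasible] obtain l where l: "\<forall>i\<in>?I. 0 \<le> l i"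
      "\<forall>k\<in>K. (\<Sum>i\<in>?I. l i * A' i k) = 0" "(\<Sum>i\<in>?I. l i * b' i) < 0"
    by blast
  have l_nonneg: "0 \<le> l None" "\<forall>x\<in>S. 0 \<le> l (Some x)" using l(1) by simp_all
  have l_A: "\<forall>k\<in>K. (\<Sum>x\<in>S. A x k * l (Some x)) = l None * c k"
  proof
    fix k assume "k \<in> K"
    with l(2) have "l None * - c k + (\<Sum>x\<in>S. l (Some x) * A x k) = 0" by (simp add: sum_I A'_def)
    then show "(\<Sum>x\<in>S. A x k * l (Some x)) = l None * c k" by (simp add: mult.commute)
  qed
  have l_b: "(\<Sum>x\<in>S. b x * l (Some x)) < l None * (?opt + \<delta>)"
    using l(3) by (simp add: sum_I b'_def algebra_simps)
  have "0 < l None"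
  proof (rule ccontr)
    assume "\<not> 0 < l None"
    with l_nonneg have "l None = 0" by simp
    then have "(\<Sum>k\<in>K. 0 * z k) \<le> (\<Sum>x\<in>S. b x * l (Some x))"
      using lp_weak_duality[OF z_feasible l_nonneg(2)] l_A by simp
    with l_b \<open>l None = 0\<close> show False by simp
  qed
  then show ?thesis using l_nonneg l_A l_b
    by (intro exI[of _ "\<lambda>x. l (Some x) / l None"])
       (simp add: sum_divide_distrib[symmetric] divide_less_eq mult.commute)
qed

lemma lp_strong_duality:
  fixes A :: "'x \<Rightarrow> 'k \<Rightarrow> real"
  assumes "finite S" "finite K"
    and z_feasible: "\<forall>x\<in>S. (\<Sum>k\<in>K. A x k * z k) \<le> b x"
    and z_optimal: "\<And>z'. \<forall>x\<in>S. (\<Sum>k\<in>K. A x k * z' k) \<le> b x \<Longrightarrow>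
                      (\<Sum>k\<in>K. c k * z' k) \<le> (\<Sum>k\<in>K. c k * z k)"
    and w_feasible: "\<forall>x\<in>S. 0 \<le> w x" "\<forall>k\<in>K. (\<Sum>x\<in>S. A x k * w x) = c k"
    and w_optimal: "\<And>w'. \<forall>x\<in>S. 0 \<le> w' x \<Longrightarrow> \<forall>k\<in>K. (\<Sum>x\<in>S. A x k * w' x) = c k \<Longrightarrow>
                      (\<Sum>x\<in>S. b x * w x) \<le> (\<Sum>x\<in>S. b x * w' x)"
  shows "(\<Sum>x\<in>S. b x * w x) = (\<Sum>k\<in>K. c k * z k)"
proof -
  have "(\<Sum>x\<in>S. b x * w x) \<le> (\<Sum>k\<in>K. c k * z k) + \<delta>" if "0 < \<delta>" for \<delta>
  proof -
    from lp_dual_nearly_optimal[OF assms(1,2) that z_feasible z_optimal]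
    obtain w' where w': "\<forall>x\<in>S. 0 \<le> w' x" "\<forall>k\<in>K. (\<Sum>x\<in>S. A x k * w' x) = c k"
        "(\<Sum>x\<in>S. b x * w' x) < (\<Sum>k\<in>K. c k * z k) + \<delta>"
      by blast
    then show ?thesis using w_optimal[OF w'(1,2)] by linarith
  qed
  then have "(\<Sum>x\<in>S. b x * w x) \<le> (\<Sum>k\<in>K. c k * z k)" by (rule field_le_epsilon)
  moreover have "(\<Sum>k\<in>K. c k * z k) \<le> (\<Sum>x\<in>S. b x * w x)"
    by (rule lp_weak_duality[OF z_feasible w_feasible])
  ultimately show ?thesis by linarith
qed

lemma finite_Jset: "finite (Jset N m)"
  by (simp add: Jset_def)

lemma dual_optimizer_value_eq_lp_obj:
  assumes "finite S" "lp_optimizer N m \<mu> g f S y0 y" "dual_optimizer N m \<mu> g f S w"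
  shows "(\<Sum>x\<in>S. f x * w x) = lp_obj N m \<mu> g y0 y"
proof -
  \<comment> \<open>Standard form: coordinate None carries y0, with coefficient 1 in every row and in the objective.\<close>
  let ?K = "insert None (Some ` Jset N m)"
  define row where "row x q = (case q of None \<Rightarrow> 1 | Some (i, j) \<Rightarrow> g i j (x i))" for x q
  define cost where "cost q = (case q of None \<Rightarrow> 1 | Some (i, j) \<Rightarrow> gbar \<mu> g i j)" for q
  have sum_K: "(\<Sum>q\<in>?K. F q) = F None + (\<Sum>p\<in>Jset N m. F (Some p))" for F :: "(nat \<times> nat) option \<Rightarrow> real"
    using finite_Jset by (simp add: sum.reindex)
  have row_sum: "(\<Sum>q\<in>?K. row x q * z q) = z None + gdot N m g x (\<lambda>p. z (Some p))" for x z
    by (simp add: sum_K row_def gdot_def case_prod_unfold)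
  have cost_sum: "(\<Sum>q\<in>?K. cost q * z q) = lp_obj N m \<mu> g (z None) (\<lambda>p. z (Some p))" for z
    by (simp add: sum_K cost_def lp_obj_def case_prod_unfold)
  have dual_feasible_iff: "dual_feasible N m \<mu> g S w' \<longleftrightarrow>
      (\<forall>x\<in>S. 0 \<le> w' x) \<and> (\<forall>q\<in>?K. (\<Sum>x\<in>S. row x q * w' x) = cost q)" for w'
    by (auto simp: dual_feasible_def row_def cost_def case_prod_unfold)
  define z where "z q = (case q of None \<Rightarrow> y0 | Some p \<Rightarrow> y p)" for q
  have "(\<Sum>x\<in>S. f x * w x) = (\<Sum>q\<in>?K. cost q * z q)"
  proof (rule lp_strong_duality[where A = row])
    show "\<forall>x\<in>S. (\<Sum>q\<in>?K. row x q * z q) \<le> f x"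
      using assms(2) by (simp add: row_sum z_def lp_optimizer_def lp_feasible_def)
    show "(\<Sum>q\<in>?K. cost q * z' q) \<le> (\<Sum>q\<in>?K. cost q * z q)"
      if "\<forall>x\<in>S. (\<Sum>q\<in>?K. row x q * z' q) \<le> f x" for z'
      using that assms(2) by (simp add: row_sum cost_sum z_def lp_optimizer_def lp_feasible_def)
    show "\<forall>x\<in>S. 0 \<le> w x" "\<forall>q\<in>?K. (\<Sum>x\<in>S. row x q * w x) = cost q"
      using assms(3) dual_feasible_iff by (simp_all add: dual_optimizer_def)
    show "(\<Sum>x\<in>S. f x * w x) \<le> (\<Sum>x\<in>S. f x * w' x)"
      if "\<forall>x\<in>S. 0 \<le> w' x" "\<forall>q\<in>?K. (\<Sum>x\<in>S. row x q * w' x) = cost q" for w'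
      using that assms(3) dual_feasible_iff by (simp add: dual_optimizer_def)
  qed (use assms(1) finite_Jset in auto)
  then show ?thesis by (simp add: cost_sum z_def)
qed

lemma lp_value_bounds:
  assumes "S \<subseteq> T" "lp_optimizer N m \<mu> g f S y0 y" "lp_feasible N m g f T z0 z"
  shows "lp_obj N m \<mu> g z0 z \<le> lp_value N m \<mu> g f T" "lp_value N m \<mu> g f T \<le> lp_obj N m \<mu> g y0 y"
proof -
  let ?V = "{lp_obj N m \<mu> g z0' z' | z0' z'. lp_feasible N m g f T z0' z'}"
  have upper: "v \<le> lp_obj N m \<mu> g y0 y" if "v \<in> ?V" for v
    using that assms(1,2) unfolding lp_optimizer_def lp_feasible_def by blast
  have member: "lp_obj N m \<mu> g z0 z \<in> ?V" using assms(3) by blast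
  show "lp_obj N m \<mu> g z0 z \<le> lp_value N m \<mu> g f T"
    unfolding lp_value_def using member upper by (intro cSup_upper bdd_aboveI)
  show "lp_value N m \<mu> g f T \<le> lp_obj N m \<mu> g y0 y"
    unfolding lp_value_def using member upper by (intro cSup_least) auto
qed

section \<open>Measurability and integrability\<close>

lemma space_metric_borel: "Metric_space X d \<Longrightarrow> space (metric_borel X d) = X"
  unfolding metric_borel_def
  by (rule space_measure_of) (auto, metis Metric_space.topspace_mtopology openin_subset subsetD)

lemma sets_metric_borel:
  "Metric_space X d \<Longrightarrow> sets (metric_borel X d) = sigma_sets X {U. openin (Metric_space.mtopology X d) U}"
  unfolding metric_borel_def
  by (rule sets_measure_of) (auto, metis Metric_space.topspace_mtopology openin_subset subsetD)

lemma space_eq_metric_borel: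
  "Metric_space X d \<Longrightarrow> sets M = sets (metric_borel X d) \<Longrightarrow> space M = X"
  using sets_eq_imp_space_eq space_metric_borel by metis

lemma borel_measurable_continuous_map_metric_borel:
  assumes "Metric_space X d" "sets M = sets (metric_borel X d)"
    and "continuous_map (Metric_space.mtopology X d) euclideanreal h"
  shows "h \<in> borel_measurable M"
proof -
  have "h \<in> borel_measurable (metric_borel X d)"
  proof (rule borel_measurableI)
    fix S :: "real set" assume "open S"
    then have "openin (Metric_space.mtopology X d) {x \<in> topspace (Metric_space.mtopology X d). h x \<in> S}"
      using assms(3) unfolding continuous_map_def by auto
    moreover have "{x \<in> topspace (Metric_space.mtopology X d). h x \<in> S} = h -` S \<inter> space (metric_borel X d)"
      using assms(1) by (auto simp: space_metric_borel Metric_space.topspace_mtopology)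
    ultimately show "h -` S \<inter> space (metric_borel X d) \<in> sets (metric_borel X d)"
      using assms(1) by (auto simp: sets_metric_borel intro: sigma_sets.Basic)
  qed
  then show ?thesis using measurable_cong_sets[OF assms(2) refl] by blast
qed

lemma continuous_map_metric_dist_point:
  assumes "Metric_space X d" "q \<in> X"
  shows "continuous_map (Metric_space.mtopology X d) euclideanreal (\<lambda>x. d x q)"
proof -
  have "continuous_map (mtopology_of (metric (X, d))) euclideanreal (\<lambda>x. mdist (metric (X, d)) (id x) q)"
    using assms by (intro continuous_map_mdist) (simp_all add: continuous_map_id Metric_space.mspace_metric)
  then show ?thesis using assms by (simp add: Metric_space.mtopology_of Metric_space.mdist_metric)
qed

lemma compact_space_continuous_map_bounded:
  assumes "compact_space T" "continuous_map T euclideanreal h"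
  shows "\<exists>G. \<forall>x\<in>topspace T. \<bar>h x\<bar> \<le> G"
proof -
  have "compact (h ` topspace T)"
    using image_compactin[OF assms(1)[unfolded compact_space_def] assms(2)] by simp
  then obtain G where "\<forall>v\<in>h ` topspace T. norm v \<le> G"
    using compact_imp_bounded bounded_iff by metis
  then show ?thesis by auto
qed

lemma vertex_interpolation_bounds:
  assumes "bounded_polyhedral_cover X C" "vertex_interpolation_set X C m g" "j \<in> {0..m}" "x \<in> X"
  shows "0 \<le> g j x \<and> g j x \<le> 1"
proof -
  obtain vtx where nonneg: "\<And>j x. j \<in> {0..m} \<Longrightarrow> x \<in> X \<Longrightarrow> 0 \<le> g j x"
    and partition: "\<And>F x. F \<in> cover_faces C \<Longrightarrow> x \<in> F \<inter> X \<Longrightarrow>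
                       (\<Sum>j\<in>{j\<in>{0..m}. vtx j \<in> face_vertices F}. g j x) = 1"
    and vanish: "\<And>F j x. F \<in> cover_faces C \<Longrightarrow> j \<in> {0..m} \<Longrightarrow> vtx j \<notin> face_vertices F \<Longrightarrow>
                       x \<in> F \<inter> X \<Longrightarrow> g j x = 0"
    using assms(2) unfolding vertex_interpolation_set_def by blast
  obtain P where P: "P \<in> C" "x \<in> P"
    using assms(1,4) unfolding bounded_polyhedral_cover_def by blast
  then have "P \<in> cover_faces C"
    using assms(1) unfolding bounded_polyhedral_cover_def cover_faces_def
    by (blast intro: face_of_refl polyhedron_imp_convex)
  show ?thesis
  proof (cases "vtx j \<in> face_vertices P")
    case True
    have "g j x \<le> (\<Sum>j\<in>{j\<in>{0..m}. vtx j \<in> face_vertices P}. g j x)"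
      using True assms(3,4) nonneg by (intro member_le_sum) auto
    then show ?thesis using partition[OF \<open>P \<in> cover_faces C\<close>] P(2) assms(3,4) nonneg by auto
  next
    case False
    then show ?thesis using vanish[OF \<open>P \<in> cover_faces C\<close> assms(3) False] P(2) assms(4) by simp
  qed
qed

lemma BSS_moment_function_measurable_bounded:
  assumes "Metric_space X d" "compact_space (Metric_space.mtopology X d)"
    and "sets M = sets (metric_borel X d)"
    and "BSS_a X d M m g \<or> BSS_b X d M m g" "j \<in> {1..m}"
  shows "g j \<in> borel_measurable M \<and> (\<exists>G. \<forall>x\<in>X. \<bar>g j x\<bar> \<le> G)"
  using assms(4)
proof
  assume "BSS_a X d M m g"
  then have continuous: "continuous_map (Metric_space.mtopology X d) euclideanreal (g j)"
    using assms(5) unfolding BSS_a_def by blast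
  obtain G where "\<forall>x\<in>topspace (Metric_space.mtopology X d). \<bar>g j x\<bar> \<le> G"
    using compact_space_continuous_map_bounded[OF assms(2) continuous] by blast
  then show ?thesis
    using borel_measurable_continuous_map_metric_borel[OF assms(1,3) continuous]
    by (auto simp: Metric_space.topspace_mtopology[OF assms(1)])
next
  assume BSS_b: "BSS_b X d M m g"
  then have "0 < integral\<^sup>L M (g j)" using assms(5) unfolding BSS_b_def by auto
  then have "integrable M (g j)" using not_integrable_integral_eq by force
  moreover have "\<forall>x\<in>X. \<bar>g j x\<bar> \<le> 1"
    using BSS_b assms(5) vertex_interpolation_bounds unfolding BSS_b_def by fastforce
  ultimately show ?thesis by blast
qed

lemma finite_family_uniformly_bounded:
  fixes h :: "'i \<Rightarrow> 'x \<Rightarrow> real"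
  assumes "finite I" "\<And>i. i \<in> I \<Longrightarrow> \<exists>B. \<forall>x\<in>S i. \<bar>h i x\<bar> \<le> B"
  shows "\<exists>B. \<forall>i\<in>I. \<forall>x\<in>S i. \<bar>h i x\<bar> \<le> B"
proof -
  obtain B where B: "\<forall>i\<in>I. \<forall>x\<in>S i. \<bar>h i x\<bar> \<le> B i"
    using bchoice[of I "\<lambda>i B. \<forall>x\<in>S i. \<bar>h i x\<bar> \<le> B"] assms(2) by blast
  have "B i \<le> (\<Sum>i\<in>I. \<bar>B i\<bar>)" if "i \<in> I" for i
    using assms(1) that by (meson abs_ge_self member_le_sum abs_ge_zero order_trans)
  then show ?thesis using B by (meson order_trans)
qed

lemma BSS_moment_functions_regular:
  fixes N :: nat
  assumes metric: "\<And>i. i < N \<Longrightarrow> Metric_space (X i) (d i)"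
    and compact: "\<And>i. i < N \<Longrightarrow> compact_space (Metric_space.mtopology (X i) (d i))"
    and borel: "\<And>i. i < N \<Longrightarrow> sets (\<mu> i) = sets (metric_borel (X i) (d i))"
    and BSS: "(\<forall>i<N. BSS_a (X i) (d i) (\<mu> i) (m i) (g i)) \<or> (\<forall>i<N. BSS_b (X i) (d i) (\<mu> i) (m i) (g i))"
  shows "\<forall>i j. (i, j) \<in> Jset N m \<longrightarrow> g i j \<in> borel_measurable (\<mu> i)"
    and "\<exists>G. \<forall>i j x. (i, j) \<in> Jset N m \<longrightarrow> x \<in> X i \<longrightarrow> \<bar>g i j x\<bar> \<le> G"
proof -
  have regular: "g i j \<in> borel_measurable (\<mu> i) \<and> (\<exists>G. \<forall>x\<in>X i. \<bar>g i j x\<bar> \<le> G)"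
    if "(i, j) \<in> Jset N m" for i j
    using that BSS by (intro BSS_moment_function_measurable_bounded[OF metric compact borel]) (auto simp: Jset_def)
  then show "\<forall>i j. (i, j) \<in> Jset N m \<longrightarrow> g i j \<in> borel_measurable (\<mu> i)" by blast
  have "\<exists>G. \<forall>p\<in>Jset N m. \<forall>x\<in>X (fst p). \<bar>g (fst p) (snd p) x\<bar> \<le> G"
    using regular by (intro finite_family_uniformly_bounded[OF finite_Jset]) auto
  then obtain G where "\<forall>p\<in>Jset N m. \<forall>x\<in>X (fst p). \<bar>g (fst p) (snd p) x\<bar> \<le> G" ..
  then show "\<exists>G. \<forall>i j x. (i, j) \<in> Jset N m \<longrightarrow> x \<in> X i \<longrightarrow> \<bar>g i j x\<bar> \<le> G" by force
qed

lemma space_PiM_metric_borel: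
  fixes N :: nat
  assumes "\<And>i. i < N \<Longrightarrow> Metric_space (X i) (d i)"
    and "\<And>i. i < N \<Longrightarrow> sets (\<mu> i) = sets (metric_borel (X i) (d i))"
  shows "space (PiM {..<N} \<mu>) = PiE {..<N} X"
proof -
  have "space (\<mu> i) = X i" if "i \<in> {..<N}" for i
    using that space_eq_metric_borel[OF assms] by blast
  then show ?thesis unfolding space_PiM by (rule PiE_cong)
qed

lemma compact_space_finite_net:
  assumes "Metric_space X d" "compact_space (Metric_space.mtopology X d)" "0 < e"
  shows "\<exists>K. finite K \<and> K \<subseteq> X \<and> (\<forall>x\<in>X. \<exists>q\<in>K. d x q < e)"
proof -
  have "Metric_space.mtotally_bounded X d X"
    using Metric_space.compact_space_eq_mcomplete_mtotally_bounded[OF assms(1)] assms(2) by blast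
  then have "\<exists>K. finite K \<and> K \<subseteq> X \<and> X \<subseteq> (\<Union>q\<in>K. Metric_space.mball X d q e)"
    using assms(3) by (simp add: Metric_space.mtotally_bounded_def[OF assms(1)])
  then obtain K where K: "finite K" "K \<subseteq> X" "X \<subseteq> (\<Union>q\<in>K. Metric_space.mball X d q e)" by blast
  have "\<exists>q\<in>K. d x q < e" if x: "x \<in> X" for x
  proof -
    obtain q where q: "q \<in> K" "x \<in> Metric_space.mball X d q e" using K(3) x by blast
    moreover have "d x q = d q x" by (rule Metric_space.commute[OF assms(1)])
    ultimately show ?thesis by (intro bexI[of _ q]) (auto simp: Metric_space.in_mball[OF assms(1)])
  qed
  with K(1,2) show ?thesis by blast
qed

lemma finite_net_PiE:
  fixes N :: nat
  assumes metric: "\<And>i. i < N \<Longrightarrow> Metric_space (X i) (d i)"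
    and compact: "\<And>i. i < N \<Longrightarrow> compact_space (Metric_space.mtopology (X i) (d i))"
    and "0 < e"
  shows "\<exists>D. finite D \<and> D \<subseteq> PiE {..<N} X \<and> (\<forall>x\<in>PiE {..<N} X. \<exists>q\<in>D. (\<Sum>i<N. d i (x i) (q i)) < e)"
proof -
  define e' where "e' = e / (real N + 1)"
  have "0 < e'" using \<open>0 < e\<close> by (simp add: e'_def)
  have "\<forall>i\<in>{..<N}. \<exists>K. finite K \<and> K \<subseteq> X i \<and> (\<forall>x\<in>X i. \<exists>q\<in>K. d i x q < e')"
    using compact_space_finite_net[OF metric compact \<open>0 < e'\<close>] by simp
  from bchoice[OF this] obtain K where K: "\<forall>i\<in>{..<N}. finite (K i) \<and> K i \<subseteq> X i \<and>
      (\<forall>x\<in>X i. \<exists>q\<in>K i. d i x q < e')" ..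
  have "\<exists>q\<in>PiE {..<N} K. (\<Sum>i<N. d i (x i) (q i)) < e" if x: "x \<in> PiE {..<N} X" for x
  proof -
    have "\<forall>i\<in>{..<N}. \<exists>q. q \<in> K i \<and> d i (x i) q < e'" using K x by blast
    from bchoice[OF this] obtain q where q: "\<forall>i\<in>{..<N}. q i \<in> K i \<and> d i (x i) (q i) < e'"
      by blast
    have "(\<Sum>i<N. d i (x i) (restrict q {..<N} i)) \<le> real N * e'"
      using q sum_bounded_above[of "{..<N}" "\<lambda>i. d i (x i) (q i)" e'] by (simp add: less_imp_le)
    also have "\<dots> < e" using \<open>0 < e\<close> by (simp add: e'_def field_simps)
    finally show ?thesis using q by (intro bexI[of _ "restrict q {..<N}"]) auto
  qed
  moreover have "finite (PiE {..<N} K)" "PiE {..<N} K \<subseteq> PiE {..<N} X"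
    using K by (auto intro!: finite_PiE PiE_mono)
  ultimately show ?thesis by blast
qed

lemma lipschitz_PiE_bounded:
  fixes N :: nat
  assumes metric: "\<And>i. i < N \<Longrightarrow> Metric_space (X i) (d i)"
    and compact: "\<And>i. i < N \<Longrightarrow> compact_space (Metric_space.mtopology (X i) (d i))"
    and "0 \<le> L"
    and lipschitz: "\<forall>x\<in>PiE {..<N} X. \<forall>x'\<in>PiE {..<N} X. \<bar>f x - f x'\<bar> \<le> L * (\<Sum>i<N. d i (x i) (x' i))"
  shows "\<exists>B. \<forall>x\<in>PiE {..<N} X. \<bar>f x\<bar> \<le> B"
proof -
  from finite_net_PiE[OF metric compact zero_less_one] obtain D where D: "finite D \<and>
      D \<subseteq> PiE {..<N} X \<and> (\<forall>x\<in>PiE {..<N} X. \<exists>q\<in>D. (\<Sum>i<N. d i (x i) (q i)) < 1)" ..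
  have "\<bar>f x\<bar> \<le> Max ((\<lambda>q. \<bar>f q\<bar>) ` D) + L" if x: "x \<in> PiE {..<N} X" for x
  proof -
    obtain q where q: "q \<in> D" "(\<Sum>i<N. d i (x i) (q i)) < 1" using D x by blast
    have "\<bar>f x - f q\<bar> \<le> L * (\<Sum>i<N. d i (x i) (q i))" using lipschitz x D q(1) by blast
    also have "\<dots> \<le> L" using q(2) \<open>0 \<le> L\<close> by (simp add: mult_left_le)
    finally have "\<bar>f x\<bar> \<le> \<bar>f q\<bar> + L" by simp
    also have "\<bar>f q\<bar> \<le> Max ((\<lambda>q. \<bar>f q\<bar>) ` D)" using D q(1) by (intro Max_ge) auto
    finally show ?thesis by simp
  qed
  then show ?thesis by blast
qed

lemma borel_measurable_metric_dist_PiM: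
  fixes N :: nat
  assumes metric: "\<And>i. i < N \<Longrightarrow> Metric_space (X i) (d i)"
    and borel: "\<And>i. i < N \<Longrightarrow> sets (\<mu> i) = sets (metric_borel (X i) (d i))"
    and q: "q \<in> PiE {..<N} X"
  shows "(\<lambda>x. \<Sum>i<N. d i (x i) (q i)) \<in> borel_measurable (PiM {..<N} \<mu>)"
proof (intro borel_measurable_sum)
  fix i assume i: "i \<in> {..<N}"
  then have "(\<lambda>z. d i z (q i)) \<in> borel_measurable (\<mu> i)"
    using q by (intro borel_measurable_continuous_map_metric_borel[OF metric borel]
        continuous_map_metric_dist_point[OF metric]) auto
  then show "(\<lambda>x. d i (x i) (q i)) \<in> borel_measurable (PiM {..<N} \<mu>)"
    using measurable_compose[OF measurable_component_singleton[OF i]] by blast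
qed

lemma mcshane_Min_bounds:
  fixes f :: "'b \<Rightarrow> real"
  assumes "finite D" "D \<subseteq> S" "x \<in> S" "q \<in> D" "\<rho> x q \<le> \<eta>" "0 \<le> L"
    and lipschitz: "\<And>x q. x \<in> S \<Longrightarrow> q \<in> S \<Longrightarrow> \<bar>f x - f q\<bar> \<le> L * \<rho> x q"
  shows "f x \<le> Min ((\<lambda>q. f q + L * \<rho> x q) ` D)" "Min ((\<lambda>q. f q + L * \<rho> x q) ` D) \<le> f x + 2 * L * \<eta>"
proof -
  have "\<forall>q'\<in>D. f x \<le> f q' + L * \<rho> x q'"
  proof
    fix q' assume "q' \<in> D"
    show "f x \<le> f q' + L * \<rho> x q'"
      using lipschitz[OF assms(3) subsetD[OF assms(2) \<open>q' \<in> D\<close>]] by (simp add: abs_le_iff)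
  qed
  then show "f x \<le> Min ((\<lambda>q. f q + L * \<rho> x q) ` D)" using assms(1,4) by (subst Min_ge_iff) auto
  have "Min ((\<lambda>q. f q + L * \<rho> x q) ` D) \<le> f q + L * \<rho> x q" using assms(1,4) by (intro Min_le) auto
  also have "f q \<le> f x + L * \<rho> x q"
    using lipschitz[OF assms(3) subsetD[OF assms(2,4)]] by (simp add: abs_le_iff)
  also have "L * \<rho> x q \<le> L * \<eta>" using assms(5,6) by (rule mult_left_mono)
  finally show "Min ((\<lambda>q. f q + L * \<rho> x q) ` D) \<le> f x + 2 * L * \<eta>" by simp
qed

lemma lipschitz_PiE_borel_measurable:
  fixes N :: nat
  assumes metric: "\<And>i. i < N \<Longrightarrow> Metric_space (X i) (d i)"
    and compact: "\<And>i. i < N \<Longrightarrow> compact_space (Metric_space.mtopology (X i) (d i))"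
    and borel: "\<And>i. i < N \<Longrightarrow> sets (\<mu> i) = sets (metric_borel (X i) (d i))"
    and "0 \<le> L"
    and lipschitz: "\<forall>x\<in>PiE {..<N} X. \<forall>x'\<in>PiE {..<N} X. \<bar>f x - f x'\<bar> \<le> L * (\<Sum>i<N. d i (x i) (x' i))"
  shows "f \<in> borel_measurable (PiM {..<N} \<mu>)"
proof -
  define \<rho> where "\<rho> x q = (\<Sum>i<N. d i (x i) (q i))" for x q :: "nat \<Rightarrow> 'a"
  have "\<forall>n. \<exists>D. finite D \<and> D \<subseteq> PiE {..<N} X \<and> (\<forall>x\<in>PiE {..<N} X. \<exists>q\<in>D. \<rho> x q < 1 / real (Suc n))"
  proof
    fix n
    have "0 < 1 / real (Suc n)" by simp
    from finite_net_PiE[OF metric compact this]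
    show "\<exists>D. finite D \<and> D \<subseteq> PiE {..<N} X \<and> (\<forall>x\<in>PiE {..<N} X. \<exists>q\<in>D. \<rho> x q < 1 / real (Suc n))"
      unfolding \<rho>_def .
  qed
  from choice[OF this] obtain D where D: "\<forall>n. finite (D n) \<and> D n \<subseteq> PiE {..<N} X \<and>
      (\<forall>x\<in>PiE {..<N} X. \<exists>q\<in>D n. \<rho> x q < 1 / real (Suc n))" ..
  then have D_finite: "finite (D n)" and D_subset: "D n \<subseteq> PiE {..<N} X"
    and D_net: "x \<in> PiE {..<N} X \<Longrightarrow> \<exists>q\<in>D n. \<rho> x q < 1 / real (Suc n)" for n x
    by simp_all
  have lip: "\<bar>f x - f q\<bar> \<le> L * \<rho> x q" if "x \<in> PiE {..<N} X" "q \<in> PiE {..<N} X" for x q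
    using lipschitz[rule_format, OF that] unfolding \<rho>_def .
  \<comment> \<open>McShane-type envelopes of f over the nets D n: measurable as finite minima, and they converge to f.\<close>
  define u where "u n x = Min ((\<lambda>q. f q + L * \<rho> x q) ` D n)" for n x
  have u_measurable: "u n \<in> borel_measurable (PiM {..<N} \<mu>)" for n
    unfolding u_def \<rho>_def using D_finite D_subset
    by (intro borel_measurable_Min borel_measurable_add borel_measurable_const borel_measurable_times
        borel_measurable_metric_dist_PiM[OF metric borel]) auto
  have u_bounds: "f x \<le> u n x" "u n x \<le> f x + 2 * L * (1 / real (Suc n))" if x: "x \<in> PiE {..<N} X" for n x
  proof -
    obtain q where q: "q \<in> D n" "\<rho> x q < 1 / real (Suc n)" using D_net[OF x] ..
    show "f x \<le> u n x" "u n x \<le> f x + 2 * L * (1 / real (Suc n))"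
      unfolding u_def
      using mcshane_Min_bounds[where D = "D n" and S = "PiE {..<N} X" and \<rho> = \<rho> and f = f,
          OF D_finite D_subset x q(1) less_imp_le[OF q(2)] \<open>0 \<le> L\<close> lip]
      by simp_all
  qed
  show ?thesis
  proof (rule borel_measurable_LIMSEQ_real[OF _ u_measurable])
    fix x assume "x \<in> space (PiM {..<N} \<mu>)"
    then have x: "x \<in> PiE {..<N} X" using space_PiM_metric_borel[OF metric borel] by simp
    have upper: "(\<lambda>n. f x + 2 * L * (1 / real (Suc n))) \<longlonglongrightarrow> f x + 2 * L * 0"
      by (intro tendsto_add tendsto_mult tendsto_const LIMSEQ_Suc[OF lim_const_over_n])
    show "(\<lambda>n. u n x) \<longlonglongrightarrow> f x"
    proof (rule tendsto_sandwich[of "\<lambda>_. f x" _ _ "\<lambda>n. f x + 2 * L * (1 / real (Suc n))"])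
      show "\<forall>\<^sub>F n in sequentially. f x \<le> u n x"
        "\<forall>\<^sub>F n in sequentially. u n x \<le> f x + 2 * L * (1 / real (Suc n))"
        using u_bounds[OF x] by simp_all
    qed (use upper in simp_all)
  qed
qed

lemma discrete_measure_eq_distr:
  assumes "finite S" "S \<subseteq> space M"
  shows "discrete_measure M S w = distr (point_measure S (\<lambda>x. ennreal (w x))) M (\<lambda>x. x)"
proof -
  let ?P = "point_measure S (\<lambda>x. ennreal (w x))"
  let ?D = "distr ?P M (\<lambda>x. x)"
  have id_measurable: "(\<lambda>x. x) \<in> measurable ?P M" using assms(2) by (auto simp: space_point_measure)
  have "emeasure ?D A = (\<Sum>x\<in>S \<inter> A. ennreal (w x))" if "A \<in> sets M" for A
  proof -
    have "emeasure ?D A = emeasure ?P ((\<lambda>x. x) -` A \<inter> space ?P)"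
      by (rule emeasure_distr[OF id_measurable that])
    also have "(\<lambda>x. x) -` A \<inter> space ?P = S \<inter> A" by (auto simp: space_point_measure)
    finally show ?thesis using assms(1) by (simp add: emeasure_point_measure_finite)
  qed
  then have "measure_of (space M) (sets M) (emeasure ?D)
      = measure_of (space M) (sets M) (\<lambda>A. \<Sum>x\<in>S \<inter> A. ennreal (w x))"
    by (intro measure_of_eq sets.space_closed) (simp add: sets.sigma_sets_eq)
  then show ?thesis
    unfolding discrete_measure_def using measure_of_of_measure[of ?D] by simp
qed

lemma sets_discrete_measure: "sets (discrete_measure M S w) = sets M"
  unfolding discrete_measure_def by (simp add: sets.sigma_sets_eq sets.space_closed)

lemma integral_discrete_measure:
  fixes h :: "'b \<Rightarrow> real"
  assumes "finite S" "S \<subseteq> space M" "\<And>x. x \<in> S \<Longrightarrow> 0 \<le> w x" "h \<in> borel_measurable M"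
  shows "integral\<^sup>L (discrete_measure M S w) h = (\<Sum>x\<in>S. w x * h x)"
proof -
  have "(\<lambda>x. x) \<in> measurable (point_measure S (\<lambda>x. ennreal (w x))) M"
    using assms(2) by (auto simp: space_point_measure)
  then have "integral\<^sup>L (discrete_measure M S w) h = integral\<^sup>L (point_measure S (\<lambda>x. ennreal (w x))) h"
    unfolding discrete_measure_eq_distr[OF assms(1,2)] using assms(4) by (simp add: integral_distr)
  also have "\<dots> = (\<Sum>x\<in>S. w x * h x)"
    using assms(3) by (subst lebesgue_integral_point_measure_finite[OF assms(1)]) auto
  finally show ?thesis .
qed

lemma prob_space_discrete_measure:
  assumes "finite S" "S \<subseteq> space M" "\<And>x. x \<in> S \<Longrightarrow> 0 \<le> w x" "(\<Sum>x\<in>S. w x) = 1"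
  shows "prob_space (discrete_measure M S w)"
proof
  let ?P = "point_measure S (\<lambda>x. ennreal (w x))"
  have "(\<lambda>x. x) \<in> measurable ?P M" using assms(2) by (auto simp: space_point_measure)
  then have "emeasure (discrete_measure M S w) (space (discrete_measure M S w))
      = emeasure ?P ((\<lambda>x. x) -` space M \<inter> space ?P)"
    unfolding discrete_measure_eq_distr[OF assms(1,2)] by (simp add: emeasure_distr)
  also have "(\<lambda>x. x) -` space M \<inter> space ?P = S" using assms(2) by (auto simp: space_point_measure)
  also have "emeasure ?P S = ennreal (\<Sum>x\<in>S. w x)"
    using assms(1,3) by (simp add: emeasure_point_measure_finite sum_ennreal)
  finally show "emeasure (discrete_measure M S w) (space (discrete_measure M S w)) = 1"
    using assms(4) by simp
qed

lemma integral_distr_component: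
  fixes h :: "'a \<Rightarrow> real"
  assumes "sets \<nu> = sets (PiM I \<mu>)" "i \<in> I" "h \<in> borel_measurable (\<mu> i)"
  shows "integral\<^sup>L (distr \<nu> (\<mu> i) (\<lambda>x. x i)) h = integral\<^sup>L \<nu> (\<lambda>x. h (x i))"
proof (rule integral_distr[OF _ assms(3)])
  show "(\<lambda>x. x i) \<in> measurable \<nu> (\<mu> i)"
    using measurable_component_singleton[OF assms(2)] measurable_cong_sets[OF assms(1) refl] by blast
qed

lemma discrete_measure_in_Gamma:
  assumes "finite S" "S \<subseteq> space (PiM {..<N} \<mu>)" "dual_feasible N m \<mu> g S w"
    and "\<And>i j. (i, j) \<in> Jset N m \<Longrightarrow> g i j \<in> borel_measurable (\<mu> i)"
  shows "discrete_measure (PiM {..<N} \<mu>) S w \<in> Gamma N m \<mu> g"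
proof -
  let ?\<nu> = "discrete_measure (PiM {..<N} \<mu>) S w"
  have w: "\<And>x. x \<in> S \<Longrightarrow> 0 \<le> w x" "(\<Sum>x\<in>S. w x) = 1"
    "\<And>i j. (i, j) \<in> Jset N m \<Longrightarrow> (\<Sum>x\<in>S. g i j (x i) * w x) = gbar \<mu> g i j"
    using assms(3) unfolding dual_feasible_def by auto
  have "integral\<^sup>L (distr ?\<nu> (\<mu> i) (\<lambda>x. x i)) (g i j) = integral\<^sup>L (\<mu> i) (g i j)"
    if "i < N" "j \<in> {1..m i}" for i j
  proof -
    have ij: "(i, j) \<in> Jset N m" using that by (simp add: Jset_def)
    have "integral\<^sup>L (distr ?\<nu> (\<mu> i) (\<lambda>x. x i)) (g i j) = integral\<^sup>L ?\<nu> (\<lambda>x. g i j (x i))"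
      by (rule integral_distr_component[OF sets_discrete_measure]) (use that(1) assms(4)[OF ij] in simp_all)
    also have "\<dots> = (\<Sum>x\<in>S. w x * g i j (x i))"
      using that(1) assms(4)[OF ij]
      by (intro integral_discrete_measure[OF assms(1,2) w(1)] measurable_PiM_component_rev) simp_all
    also have "\<dots> = integral\<^sup>L (\<mu> i) (g i j)" using w(3)[OF ij] by (simp add: gbar_def mult.commute)
    finally show ?thesis .
  qed
  then show ?thesis
    unfolding Gamma_def using prob_space_discrete_measure[OF assms(1,2) w(1,2)]
    by (simp add: sets_discrete_measure)
qed

lemma dual_optimizer_discrete_measure:
  assumes "finite S" "S \<subseteq> space (PiM {..<N} \<mu>)"
    and "lp_optimizer N m \<mu> g f S y0 y" "dual_optimizer N m \<mu> g f S w"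
    and "\<And>i j. (i, j) \<in> Jset N m \<Longrightarrow> g i j \<in> borel_measurable (\<mu> i)"
    and "f \<in> borel_measurable (PiM {..<N} \<mu>)"
  shows "discrete_measure (PiM {..<N} \<mu>) S w \<in> Gamma N m \<mu> g"
    and "integral\<^sup>L (discrete_measure (PiM {..<N} \<mu>) S w) f = lp_obj N m \<mu> g y0 y"
proof -
  have w: "dual_feasible N m \<mu> g S w" using assms(4) by (simp add: dual_optimizer_def)
  show "discrete_measure (PiM {..<N} \<mu>) S w \<in> Gamma N m \<mu> g"
    by (rule discrete_measure_in_Gamma[OF assms(1,2) w assms(5)])
  have "integral\<^sup>L (discrete_measure (PiM {..<N} \<mu>) S w) f = (\<Sum>x\<in>S. w x * f x)"
    by (rule integral_discrete_measure[OF assms(1,2) _ assms(6)]) (use w in \<open>simp add: dual_feasible_def\<close>)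
  also have "\<dots> = lp_obj N m \<mu> g y0 y"
    using dual_optimizer_value_eq_lp_obj[OF assms(1,3,4)] by (simp add: mult.commute)
  finally show "integral\<^sup>L (discrete_measure (PiM {..<N} \<mu>) S w) f = lp_obj N m \<mu> g y0 y" .
qed

lemma integral_moment_Gamma:
  assumes "\<nu> \<in> Gamma N m \<mu> g" "space (PiM {..<N} \<mu>) = PiE {..<N} X" "(i, j) \<in> Jset N m"
    and "g i j \<in> borel_measurable (\<mu> i)" "\<And>x. x \<in> X i \<Longrightarrow> \<bar>g i j x\<bar> \<le> G"
  shows "integrable \<nu> (\<lambda>x. g i j (x i))" "integral\<^sup>L \<nu> (\<lambda>x. g i j (x i)) = gbar \<mu> g i j"
proof -
  have ij: "i < N" "j \<in> {1..m i}" using assms(3) by (simp_all add: Jset_def)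
  have \<nu>: "prob_space \<nu>" "sets \<nu> = sets (PiM {..<N} \<mu>)"
    and marginal: "integral\<^sup>L (distr \<nu> (\<mu> i) (\<lambda>x. x i)) (g i j) = integral\<^sup>L (\<mu> i) (g i j)"
    using assms(1) ij unfolding Gamma_def by auto
  interpret prob_space \<nu> by (rule \<nu>(1))
  show "integrable \<nu> (\<lambda>x. g i j (x i))"
  proof (rule integrable_const_bound[where B = G])
    show "AE x in \<nu>. norm (g i j (x i)) \<le> G"
      using assms(5) ij(1) sets_eq_imp_space_eq[OF \<nu>(2)] assms(2) by (intro AE_I2) (auto simp: PiE_iff)
    have "(\<lambda>x. g i j (x i)) \<in> borel_measurable (PiM {..<N} \<mu>)"
      using ij(1) assms(4) by (intro measurable_PiM_component_rev) auto
    then show "(\<lambda>x. g i j (x i)) \<in> borel_measurable \<nu>" using measurable_cong_sets[OF \<nu>(2) refl] by blast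
  qed
  have "integral\<^sup>L \<nu> (\<lambda>x. g i j (x i)) = integral\<^sup>L (distr \<nu> (\<mu> i) (\<lambda>x. x i)) (g i j)"
    by (rule integral_distr_component[OF \<nu>(2) _ assms(4), symmetric]) (use ij(1) in simp)
  also have "\<dots> = gbar \<mu> g i j" unfolding gbar_def by (rule marginal)
  finally show "integral\<^sup>L \<nu> (\<lambda>x. g i j (x i)) = gbar \<mu> g i j" .
qed

lemma integral_lp_constraint_Gamma:
  assumes "\<nu> \<in> Gamma N m \<mu> g" "space (PiM {..<N} \<mu>) = PiE {..<N} X"
    and "\<And>i j. (i, j) \<in> Jset N m \<Longrightarrow> g i j \<in> borel_measurable (\<mu> i)"
    and "\<And>i j x. (i, j) \<in> Jset N m \<Longrightarrow> x \<in> X i \<Longrightarrow> \<bar>g i j x\<bar> \<le> G"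
  shows "integrable \<nu> (\<lambda>x. y0 + gdot N m g x y)" "integral\<^sup>L \<nu> (\<lambda>x. y0 + gdot N m g x y) = lp_obj N m \<mu> g y0 y"
proof -
  interpret prob_space \<nu> using assms(1) by (simp add: Gamma_def)
  have moment_integrable: "integrable \<nu> (\<lambda>x. g (fst p) (snd p) (x (fst p)) * y p)"
    and moment_integral: "integral\<^sup>L \<nu> (\<lambda>x. g (fst p) (snd p) (x (fst p)) * y p) = gbar \<mu> g (fst p) (snd p) * y p"
    if "p \<in> Jset N m" for p
  proof -
    obtain i j where p: "p = (i, j)" by fastforce
    with that have ij: "(i, j) \<in> Jset N m" by simp
    from integral_moment_Gamma[OF assms(1,2) ij assms(3)[OF ij] assms(4)[OF ij]] p
    show "integrable \<nu> (\<lambda>x. g (fst p) (snd p) (x (fst p)) * y p)"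
      "integral\<^sup>L \<nu> (\<lambda>x. g (fst p) (snd p) (x (fst p)) * y p) = gbar \<mu> g (fst p) (snd p) * y p"
      by simp_all
  qed
  have gdot_integrable: "integrable \<nu> (\<lambda>x. gdot N m g x y)"
    unfolding gdot_def case_prod_unfold prod.collapse
    by (rule Bochner_Integration.integrable_sum) (rule moment_integrable)
  then show "integrable \<nu> (\<lambda>x. y0 + gdot N m g x y)"
    by (rule Bochner_Integration.integrable_add[OF integrable_const])
  have "integral\<^sup>L \<nu> (\<lambda>x. gdot N m g x y)
      = (\<Sum>p\<in>Jset N m. integral\<^sup>L \<nu> (\<lambda>x. g (fst p) (snd p) (x (fst p)) * y p))"
    unfolding gdot_def case_prod_unfold prod.collapse
    by (rule Bochner_Integration.integral_sum) (rule moment_integrable)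
  also have "\<dots> = (\<Sum>p\<in>Jset N m. gbar \<mu> g (fst p) (snd p) * y p)"
    by (rule sum.cong[OF refl]) (rule moment_integral)
  finally have "integral\<^sup>L \<nu> (\<lambda>x. gdot N m g x y) = lp_obj N m \<mu> g 0 y"
    by (simp add: lp_obj_def case_prod_unfold)
  moreover have "integral\<^sup>L \<nu> (\<lambda>x. y0 + gdot N m g x y) = y0 + integral\<^sup>L \<nu> (\<lambda>x. gdot N m g x y)"
    using Bochner_Integration.integral_add[OF integrable_const gdot_integrable, of y0] by (simp add: prob_space)
  ultimately show "integral\<^sup>L \<nu> (\<lambda>x. y0 + gdot N m g x y) = lp_obj N m \<mu> g y0 y"
    by (simp add: lp_obj_def)
qed

lemma lp_obj_le_integral_Gamma:
  assumes "\<nu> \<in> Gamma N m \<mu> g" "space (PiM {..<N} \<mu>) = PiE {..<N} X"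
    and "f \<in> borel_measurable (PiM {..<N} \<mu>)" "\<And>x. x \<in> PiE {..<N} X \<Longrightarrow> \<bar>f x\<bar> \<le> B"
    and "\<And>i j. (i, j) \<in> Jset N m \<Longrightarrow> g i j \<in> borel_measurable (\<mu> i)"
    and "\<And>i j x. (i, j) \<in> Jset N m \<Longrightarrow> x \<in> X i \<Longrightarrow> \<bar>g i j x\<bar> \<le> G"
    and "lp_feasible N m g f (PiE {..<N} X) y0 y"
  shows "lp_obj N m \<mu> g y0 y \<le> integral\<^sup>L \<nu> f"
proof -
  have sets: "sets \<nu> = sets (PiM {..<N} \<mu>)" and "prob_space \<nu>"
    using assms(1) by (simp_all add: Gamma_def)
  interpret prob_space \<nu> by fact
  have space: "space \<nu> = PiE {..<N} X" using sets_eq_imp_space_eq[OF sets] assms(2) by simp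
  have "integrable \<nu> f"
  proof (rule integrable_const_bound[where B = B])
    show "AE x in \<nu>. norm (f x) \<le> B" using assms(4) space by (intro AE_I2) simp
    show "f \<in> borel_measurable \<nu>" using assms(3) measurable_cong_sets[OF sets refl] by blast
  qed
  then have "integral\<^sup>L \<nu> (\<lambda>x. y0 + gdot N m g x y) \<le> integral\<^sup>L \<nu> f"
    using integral_lp_constraint_Gamma(1)[OF assms(1,2,5,6)] assms(7) space
    by (intro integral_mono) (auto simp: lp_feasible_def)
  then show ?thesis using integral_lp_constraint_Gamma(2)[OF assms(1,2,5,6)] by simp
qed

lemma mot_value_bounds:
  fixes f :: "(nat \<Rightarrow> 'a) \<Rightarrow> real"
  assumes "\<nu> \<in> Gamma N m \<mu> g" "\<And>\<nu>'. \<nu>' \<in> Gamma N m \<mu> g \<Longrightarrow> a \<le> integral\<^sup>L \<nu>' f"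
  shows "a \<le> mot_value N m \<mu> g f" "mot_value N m \<mu> g f \<le> integral\<^sup>L \<nu> f"
  unfolding mot_value_def using assms
  by (auto intro!: cInf_greatest cInf_lower bdd_belowI[of _ a])

section \<open>Termination of the cutting-plane method\<close>

lemma abs_diff_less_of_floor_divide_eq:
  fixes a b \<delta> :: real
  assumes "\<lfloor>a / \<delta>\<rfloor> = \<lfloor>b / \<delta>\<rfloor>" "0 < \<delta>"
  shows "\<bar>a - b\<bar> < \<delta>"
proof -
  have "\<bar>a / \<delta> - b / \<delta>\<bar> < 1"
    using assms(1) floor_correct[of "a / \<delta>"] floor_correct[of "b / \<delta>"] by linarith
  then show ?thesis using assms(2) by (simp add: diff_divide_distrib[symmetric] abs_less_iff field_simps)
qed

lemma floor_divide_bounded: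
  fixes a B \<delta> :: real
  assumes "\<bar>a\<bar> \<le> B" "0 < \<delta>"
  shows "\<lfloor>a / \<delta>\<rfloor> \<in> {-\<lceil>B / \<delta>\<rceil>..\<lceil>B / \<delta>\<rceil>}"
proof -
  have "- (B / \<delta>) \<le> a / \<delta>" "a / \<delta> \<le> B / \<delta>"
    using assms by (simp_all add: abs_le_iff field_simps)
  then have "\<lfloor>- (B / \<delta>)\<rfloor> \<le> \<lfloor>a / \<delta>\<rfloor>" "\<lfloor>a / \<delta>\<rfloor> \<le> \<lfloor>B / \<delta>\<rfloor>" by (simp_all add: floor_mono)
  moreover have "\<lfloor>- (B / \<delta>)\<rfloor> = - \<lceil>B / \<delta>\<rceil>" by (simp add: ceiling_def)
  moreover have "\<lfloor>B / \<delta>\<rfloor> \<le> \<lceil>B / \<delta>\<rceil>" by (rule floor_le_ceiling)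
  ultimately show ?thesis unfolding atLeastAtMost_iff by linarith
qed

lemma bounded_sequence_close_pair:
  fixes y0 :: "nat \<Rightarrow> real" and y :: "nat \<Rightarrow> 'p \<Rightarrow> real"
  assumes "finite J" "0 < \<delta>" "\<And>r. \<bar>y0 r\<bar> \<le> B" "\<And>r p. p \<in> J \<Longrightarrow> \<bar>y r p\<bar> \<le> B"
  shows "\<exists>r r'. r < r' \<and> \<bar>y0 r - y0 r'\<bar> < \<delta> \<and> (\<forall>p\<in>J. \<bar>y r p - y r' p\<bar> < \<delta>)"
proof -
  define K where "K = \<lceil>B / \<delta>\<rceil>"
  define cell where "cell r = (\<lfloor>y0 r / \<delta>\<rfloor>, restrict (\<lambda>p. \<lfloor>y r p / \<delta>\<rfloor>) J)" for r
  have "range cell \<subseteq> {-K..K} \<times> PiE J (\<lambda>_. {-K..K})"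
    using floor_divide_bounded[OF assms(3) assms(2)] floor_divide_bounded[OF assms(4) assms(2)]
    by (auto simp: cell_def K_def)
  moreover have "finite ({-K..K} \<times> PiE J (\<lambda>_. {-K..K}))" using assms(1) by (simp add: finite_PiE)
  ultimately have "\<not> inj cell" using finite_imageD finite_subset infinite_UNIV_nat by blast
  then obtain r r' where "cell r = cell r'" "r < r'"
    unfolding inj_def by (metis linorder_neq_iff)
  then have floors: "\<lfloor>y0 r / \<delta>\<rfloor> = \<lfloor>y0 r' / \<delta>\<rfloor>" "\<forall>p\<in>J. \<lfloor>y r p / \<delta>\<rfloor> = \<lfloor>y r' p / \<delta>\<rfloor>"
    unfolding cell_def by (auto simp: fun_eq_iff split: if_splits)
  show ?thesis
  proof (intro exI conjI ballI)
    show "r < r'" by fact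
    show "\<bar>y0 r - y0 r'\<bar> < \<delta>" by (rule abs_diff_less_of_floor_divide_eq[OF floors(1) assms(2)])
    show "\<bar>y r p - y r' p\<bar> < \<delta>" if "p \<in> J" for p
      using floors(2) that abs_diff_less_of_floor_divide_eq[OF _ assms(2)] by simp
  qed
qed

lemma gdot_diff_le:
  assumes "\<And>i j. (i, j) \<in> Jset N m \<Longrightarrow> \<bar>g i j (x i)\<bar> \<le> G"
  shows "gdot N m g x z - gdot N m g x z' \<le> G * (\<Sum>p\<in>Jset N m. \<bar>z p - z' p\<bar>)"
proof -
  have "gdot N m g x z - gdot N m g x z' = (\<Sum>(i, j)\<in>Jset N m. g i j (x i) * (z (i, j) - z' (i, j)))"
    unfolding gdot_def by (simp add: case_prod_unfold sum_subtractf[symmetric] right_diff_distrib)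
  also have "\<dots> \<le> (\<Sum>(i, j)\<in>Jset N m. G * \<bar>z (i, j) - z' (i, j)\<bar>)"
  proof (rule sum_mono)
    fix p assume "p \<in> Jset N m"
    then obtain i j where p: "p = (i, j)" "(i, j) \<in> Jset N m" by (metis surj_pair)
    have "g i j (x i) * (z (i, j) - z' (i, j)) \<le> \<bar>g i j (x i)\<bar> * \<bar>z (i, j) - z' (i, j)\<bar>"
      by (metis abs_ge_self abs_mult)
    also have "\<dots> \<le> G * \<bar>z (i, j) - z' (i, j)\<bar>" using assms[OF p(2)] by (simp add: mult_right_mono)
    finally show "(case p of (i, j) \<Rightarrow> g i j (x i) * (z (i, j) - z' (i, j)))
        \<le> (case p of (i, j) \<Rightarrow> G * \<bar>z (i, j) - z' (i, j)\<bar>)" using p(1) by simp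
  qed
  also have "\<dots> = G * (\<Sum>p\<in>Jset N m. \<bar>z p - z' p\<bar>)" by (simp add: sum_distrib_left case_prod_unfold)
  finally show ?thesis .
qed

locale cutting_plane_run =
  fixes N :: nat and m :: "nat \<Rightarrow> nat" and \<mu> :: "nat \<Rightarrow> 'a measure"
    and g :: "nat \<Rightarrow> nat \<Rightarrow> 'a \<Rightarrow> real" and f :: "(nat \<Rightarrow> 'a) \<Rightarrow> real"
    and X :: "nat \<Rightarrow> 'a set" and G :: real and Xd0 :: "(nat \<Rightarrow> 'a) set"
    and Orcl :: "(nat \<times> nat \<Rightarrow> real) \<Rightarrow> (nat \<Rightarrow> 'a) \<times> real" and \<epsilon> :: real
    and Xd :: "nat \<Rightarrow> (nat \<Rightarrow> 'a) set" and y0 :: "nat \<Rightarrow> real" and y :: "nat \<Rightarrow> nat \<times> nat \<Rightarrow> real"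
  assumes g_bounded: "\<And>i j x. (i, j) \<in> Jset N m \<Longrightarrow> x \<in> X i \<Longrightarrow> \<bar>g i j x\<bar> \<le> G"
    and Xd0: "finite Xd0" "Xd0 \<subseteq> PiE {..<N} X"
    and superlevel: "lp_bounded_superlevel N m \<mu> g f Xd0"
    and Orcl: "\<And>z. fst (Orcl z) \<in> PiE {..<N} X \<and>
                   (\<forall>x\<in>PiE {..<N} X. f (fst (Orcl z)) - gdot N m g (fst (Orcl z)) z
                                       \<le> f x - gdot N m g x z) \<and>
                   snd (Orcl z) = f (fst (Orcl z)) - gdot N m g (fst (Orcl z)) z"
    and eps_pos: "\<epsilon> > 0"
    and run_init: "Xd 0 = Xd0"
    and run_lp: "\<And>r. (\<forall>r'<r. y0 r' - snd (Orcl (y r')) > \<epsilon>) \<Longrightarrow>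
                   lp_optimizer N m \<mu> g f (Xd r) (y0 r) (y r)"
    and run_cut: "\<And>r. (\<forall>r'<r. y0 r' - snd (Orcl (y r')) > \<epsilon>) \<Longrightarrow>
                   y0 r - snd (Orcl (y r)) > \<epsilon> \<Longrightarrow>
                   (\<exists>Xs. finite Xs \<and> Xs \<subseteq> PiE {..<N} X \<and> fst (Orcl (y r)) \<in> Xs \<and>
                         Xd (Suc r) = Xd r \<union> Xs)"
begin

abbreviation gap :: "nat \<Rightarrow> real" where
  "gap r \<equiv> y0 r - snd (Orcl (y r))"

abbreviation reaches :: "nat \<Rightarrow> bool" where
  "reaches r \<equiv> \<forall>r'<r. \<epsilon> < gap r'"

lemma oracle_point: "fst (Orcl z) \<in> PiE {..<N} X"
  using conjunct1[OF Orcl] .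

lemma oracle_minimal:
  "x \<in> PiE {..<N} X \<Longrightarrow> f (fst (Orcl z)) - gdot N m g (fst (Orcl z)) z \<le> f x - gdot N m g x z"
  using conjunct1[OF conjunct2[OF Orcl]] by blast

lemma oracle_value: "snd (Orcl z) = f (fst (Orcl z)) - gdot N m g (fst (Orcl z)) z"
  using conjunct2[OF conjunct2[OF Orcl]] .

lemma oracle_feasible: "lp_feasible N m g f (PiE {..<N} X) (snd (Orcl z)) z"
  unfolding lp_feasible_def
proof
  fix x assume "x \<in> PiE {..<N} X"
  from oracle_minimal[OF this, of z] show "snd (Orcl z) + gdot N m g x z \<le> f x"
    unfolding oracle_value by linarith
qed

lemma cuts_reached:
  "reaches r \<Longrightarrow> Xd0 \<subseteq> Xd r \<and> Xd r \<subseteq> PiE {..<N} X \<and> finite (Xd r)"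
proof (induction r)
  case 0
  then show ?case using run_init Xd0 by simp
next
  case (Suc r)
  then have "reaches r" "\<epsilon> < gap r" by auto
  from run_cut[OF this] obtain Xs where "finite Xs" "Xs \<subseteq> PiE {..<N} X" "Xd (Suc r) = Xd r \<union> Xs"
    by blast
  then show ?case using Suc.IH[OF \<open>reaches r\<close>] by auto
qed

lemma iterates_bounded:
  assumes "\<forall>r. \<epsilon> < gap r"
  shows "\<exists>B. \<forall>r. \<bar>y0 r\<bar> \<le> B \<and> (\<forall>p\<in>Jset N m. \<bar>y r p\<bar> \<le> B)"
proof -
  let ?c = "snd (Orcl (\<lambda>_. 0))"
  obtain B where B: "\<forall>z0 z. lp_feasible N m g f Xd0 z0 z \<and> ?c \<le> lp_obj N m \<mu> g z0 z \<longrightarrow>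
      \<bar>z0\<bar> \<le> B \<and> (\<forall>p\<in>Jset N m. \<bar>z p\<bar> \<le> B)"
    using superlevel[unfolded lp_bounded_superlevel_def, THEN spec, of ?c] ..
  have "\<bar>y0 r\<bar> \<le> B \<and> (\<forall>p\<in>Jset N m. \<bar>y r p\<bar> \<le> B)" for r
  proof (rule B[rule_format, OF conjI])
    have "reaches r" using assms by simp
    then have opt: "lp_optimizer N m \<mu> g f (Xd r) (y0 r) (y r)"
      and Xd: "Xd0 \<subseteq> Xd r" "Xd r \<subseteq> PiE {..<N} X"
      using run_lp cuts_reached by simp_all
    then show "lp_feasible N m g f Xd0 (y0 r) (y r)"
      unfolding lp_optimizer_def lp_feasible_def by (meson subsetD)
    have "lp_feasible N m g f (Xd r) ?c (\<lambda>_. 0)"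
      using oracle_feasible[of "\<lambda>_. 0"] Xd(2) unfolding lp_feasible_def by (meson subsetD)
    then have "lp_obj N m \<mu> g ?c (\<lambda>_. 0) \<le> lp_obj N m \<mu> g (y0 r) (y r)"
      using opt unfolding lp_optimizer_def by simp
    then show "?c \<le> lp_obj N m \<mu> g (y0 r) (y r)" by (simp add: lp_obj_def)
  qed
  then show ?thesis by blast
qed

lemma iterates_separated:
  assumes "\<forall>r. \<epsilon> < gap r" "r < r'"
  shows "\<epsilon> < \<bar>y0 r - y0 r'\<bar> + G * (\<Sum>p\<in>Jset N m. \<bar>y r p - y r' p\<bar>)"
proof -
  have reaches: "reaches r" for r using assms(1) by simp
  define x where "x = fst (Orcl (y r))"
  have cut: "Xd r \<subseteq> Xd (Suc r) \<and> fst (Orcl (y r)) \<in> Xd (Suc r)" for r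
  proof -
    from run_cut[OF reaches assms(1)[rule_format]] obtain Xs
      where "fst (Orcl (y r)) \<in> Xs" "Xd (Suc r) = Xd r \<union> Xs" by blast
    then show ?thesis by simp
  qed
  have "Xd (Suc r) \<subseteq> Xd r'" using lift_Suc_mono_le[of Xd "Suc r" r'] cut assms(2) by simp
  then have "x \<in> Xd r'" using cut unfolding x_def by (meson subsetD)
  then have "y0 r' + gdot N m g x (y r') \<le> f x"
    using run_lp[OF reaches] unfolding lp_optimizer_def lp_feasible_def by simp
  moreover have "\<epsilon> < y0 r - (f x - gdot N m g x (y r))"
    using assms(1)[rule_format, of r] oracle_value[of "y r"] unfolding x_def by linarith
  moreover have "x \<in> PiE {..<N} X" using oracle_point unfolding x_def .
  then have "gdot N m g x (y r) - gdot N m g x (y r') \<le> G * (\<Sum>p\<in>Jset N m. \<bar>y r p - y r' p\<bar>)"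
    using g_bounded by (intro gdot_diff_le) (auto simp: Jset_def)
  ultimately show ?thesis by linarith
qed

lemma terminates: "\<exists>r. reaches r \<and> gap r \<le> \<epsilon>"
proof -
  have "\<not> (\<forall>r. \<epsilon> < gap r)"
  proof
    assume run: "\<forall>r. \<epsilon> < gap r"
    from iterates_bounded[OF run] obtain B
      where B: "\<forall>r. \<bar>y0 r\<bar> \<le> B \<and> (\<forall>p\<in>Jset N m. \<bar>y r p\<bar> \<le> B)" ..
    have B0: "\<bar>y0 r\<bar> \<le> B" and B1: "p \<in> Jset N m \<Longrightarrow> \<bar>y r p\<bar> \<le> B" for r p
      using B by simp_all
    define \<delta> where "\<delta> = \<epsilon> / (1 + \<bar>G\<bar> * card (Jset N m))"
    have "0 < 1 + \<bar>G\<bar> * card (Jset N m)" by (simp add: add_pos_nonneg)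
    then have "0 < \<delta>" and \<delta>: "\<delta> * (1 + \<bar>G\<bar> * card (Jset N m)) = \<epsilon>"
      using eps_pos unfolding \<delta>_def by simp_all
    from bounded_sequence_close_pair[OF finite_Jset \<open>0 < \<delta>\<close> B0 B1] obtain r
      where "\<exists>r'. r < r' \<and> \<bar>y0 r - y0 r'\<bar> < \<delta> \<and> (\<forall>p\<in>Jset N m. \<bar>y r p - y r' p\<bar> < \<delta>)" ..
    then obtain r' where close: "r < r'" "\<bar>y0 r - y0 r'\<bar> < \<delta>" "\<forall>p\<in>Jset N m. \<bar>y r p - y r' p\<bar> < \<delta>"
      by blast
    from close(3) have "(\<Sum>p\<in>Jset N m. \<bar>y r p - y r' p\<bar>) \<le> card (Jset N m) * \<delta>"
      using sum_bounded_above[of "Jset N m" "\<lambda>p. \<bar>y r p - y r' p\<bar>" \<delta>] by (simp add: less_imp_le)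
    then have "\<bar>G\<bar> * (\<Sum>p\<in>Jset N m. \<bar>y r p - y r' p\<bar>) \<le> \<bar>G\<bar> * (card (Jset N m) * \<delta>)"
      by (rule mult_left_mono) simp
    moreover have "G * (\<Sum>p\<in>Jset N m. \<bar>y r p - y r' p\<bar>) \<le> \<bar>G\<bar> * (\<Sum>p\<in>Jset N m. \<bar>y r p - y r' p\<bar>)"
      by (intro mult_right_mono sum_nonneg) simp_all
    moreover have "\<delta> + \<bar>G\<bar> * (card (Jset N m) * \<delta>) = \<epsilon>"
      using \<delta> by (simp add: algebra_simps)
    ultimately show False
      using iterates_separated[OF run close(1)] close(2) by linarith
  qed
  then have "\<exists>r. gap r \<le> \<epsilon>" by (simp add: not_less)
  from exists_least_iff[THEN iffD1, OF this]
  obtain r where "gap r \<le> \<epsilon> \<and> (\<forall>r'<r. \<not> gap r' \<le> \<epsilon>)" ..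
  then show ?thesis by (intro exI[of _ r]) (simp add: not_le)
qed

end

theorem proposition4p8:
  fixes N :: nat
    and X :: "nat \<Rightarrow> 'a::euclidean_space set"
    and d :: "nat \<Rightarrow> 'a \<Rightarrow> 'a \<Rightarrow> real"
    and \<mu> :: "nat \<Rightarrow> 'a measure"
    and f :: "(nat \<Rightarrow> 'a) \<Rightarrow> real"
    and L :: real
    and m :: "nat \<Rightarrow> nat"
    and g :: "nat \<Rightarrow> nat \<Rightarrow> 'a \<Rightarrow> real"
    and Xd0 :: "(nat \<Rightarrow> 'a) set"
    and Orcl :: "(nat \<times> nat \<Rightarrow> real) \<Rightarrow> (nat \<Rightarrow> 'a) \<times> real"
    and \<epsilon> :: real
    and Xd :: "nat \<Rightarrow> (nat \<Rightarrow> 'a) set"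
    and y0 :: "nat \<Rightarrow> real"
    and y :: "nat \<Rightarrow> nat \<times> nat \<Rightarrow> real"
    and w :: "nat \<Rightarrow> (nat \<Rightarrow> 'a) \<Rightarrow> real"
  assumes metric: "\<And>i. i < N \<Longrightarrow> Metric_space (X i) (d i)"
    and compact: "\<And>i. i < N \<Longrightarrow> compact_space (Metric_space.mtopology (X i) (d i))"
    and prob: "\<And>i. i < N \<Longrightarrow> prob_space (\<mu> i)"
    and borel: "\<And>i. i < N \<Longrightarrow> sets (\<mu> i) = sets (metric_borel (X i) (d i))"
    and L_pos: "L > 0"
    and lipschitz: "\<forall>x\<in>PiE {..<N} X. \<forall>x'\<in>PiE {..<N} X.
                     \<bar>f x - f x'\<bar> \<le> L * (\<Sum>i<N. d i (x i) (x' i))"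
    and BSS: "(\<forall>i<N. BSS_a (X i) (d i) (\<mu> i) (m i) (g i)) \<or>
              (\<forall>i<N. BSS_b (X i) (d i) (\<mu> i) (m i) (g i))"
    and Xd0: "finite Xd0" "Xd0 \<subseteq> PiE {..<N} X"
    and superlevel: "lp_bounded_superlevel N m \<mu> g f Xd0"
    and Orcl: "\<And>z. fst (Orcl z) \<in> PiE {..<N} X \<and>
                   (\<forall>x\<in>PiE {..<N} X. f (fst (Orcl z)) - gdot N m g (fst (Orcl z)) z
                                       \<le> f x - gdot N m g x z) \<and>
                   snd (Orcl z) = f (fst (Orcl z)) - gdot N m g (fst (Orcl z)) z"
    and eps_pos: "\<epsilon> > 0"
    and run_init: "Xd 0 = Xd0"
    and run_lp: "\<And>r. (\<forall>r'<r. y0 r' - snd (Orcl (y r')) > \<epsilon>) \<Longrightarrow>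
                   lp_optimizer N m \<mu> g f (Xd r) (y0 r) (y r)"
    and run_dual: "\<And>r. (\<forall>r'<r. y0 r' - snd (Orcl (y r')) > \<epsilon>) \<Longrightarrow>
                   dual_optimizer N m \<mu> g f (Xd r) (w r)"
    and run_cut: "\<And>r. (\<forall>r'<r. y0 r' - snd (Orcl (y r')) > \<epsilon>) \<Longrightarrow>
                   y0 r - snd (Orcl (y r)) > \<epsilon> \<Longrightarrow>
                   (\<exists>Xs. finite Xs \<and> Xs \<subseteq> PiE {..<N} X \<and> fst (Orcl (y r)) \<in> Xs \<and>
                         Xd (Suc r) = Xd r \<union> Xs)"
  shows "\<exists>r. (\<forall>r'<r. y0 r' - snd (Orcl (y r')) > \<epsilon>) \<and> y0 r - snd (Orcl (y r)) \<le> \<epsilon> \<and>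
     (let s = snd (Orcl (y r));
          \<alpha>UB = lp_obj N m \<mu> g (y0 r) (y r);
          \<alpha>LB = lp_obj N m \<mu> g (y0 r) (y r) - y0 r + s;
          LSIP = lp_value N m \<mu> g f (PiE {..<N} X);
          hat_y0 = s;
          hat_y = y r;
          hat_\<mu> = discrete_measure (PiM {..<N} \<mu>) (Xd r) (w r);
          MOT = mot_value N m \<mu> g f
      in \<alpha>LB \<le> LSIP \<and> LSIP \<le> \<alpha>UB \<and> \<alpha>UB - \<alpha>LB \<le> \<epsilon> \<and>
         lp_feasible N m g f (PiE {..<N} X) hat_y0 hat_y \<and>
         \<bar>LSIP - lp_obj N m \<mu> g hat_y0 hat_y\<bar> \<le> \<epsilon> \<and>
         lp_obj N m \<mu> g hat_y0 hat_y = \<alpha>LB \<and>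
         hat_\<mu> \<in> Gamma N m \<mu> g \<and>
         \<bar>integral\<^sup>L hat_\<mu> f - MOT\<bar> \<le> \<epsilon> \<and>
         integral\<^sup>L hat_\<mu> f = \<alpha>UB)"
proof -
  let ?PX = "PiE {..<N} X"
  have space: "space (PiM {..<N} \<mu>) = ?PX" by (rule space_PiM_metric_borel[OF metric borel])
  have f_measurable: "f \<in> borel_measurable (PiM {..<N} \<mu>)"
    using lipschitz_PiE_borel_measurable[OF metric compact borel _ lipschitz] L_pos by simp
  obtain B where f_bounded: "\<And>x. x \<in> ?PX \<Longrightarrow> \<bar>f x\<bar> \<le> B"
    using lipschitz_PiE_bounded[OF metric compact _ lipschitz] L_pos by auto
  obtain G where g_bounded: "\<And>i j x. (i, j) \<in> Jset N m \<Longrightarrow> x \<in> X i \<Longrightarrow> \<bar>g i j x\<bar> \<le> G"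
    using BSS_moment_functions_regular(2)[OF metric compact borel BSS] by blast
  have g_measurable: "\<And>i j. (i, j) \<in> Jset N m \<Longrightarrow> g i j \<in> borel_measurable (\<mu> i)"
    using BSS_moment_functions_regular(1)[OF metric compact borel BSS] by blast
  interpret cutting_plane_run N m \<mu> g f X G Xd0 Orcl \<epsilon> Xd y0 y
    using g_bounded Xd0 superlevel Orcl eps_pos run_init run_lp run_cut by unfold_locales
  obtain r where r: "reaches r" "gap r \<le> \<epsilon>" using terminates by blast
  have opt: "lp_optimizer N m \<mu> g f (Xd r) (y0 r) (y r)" and dual: "dual_optimizer N m \<mu> g f (Xd r) (w r)"
    and cuts: "Xd r \<subseteq> ?PX" "finite (Xd r)"
    using run_lp[OF r(1)] run_dual[OF r(1)] cuts_reached[OF r(1)] by simp_all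
  note hat_\<mu> = dual_optimizer_discrete_measure[OF cuts(2) cuts(1)[folded space] opt dual g_measurable f_measurable]
  have "lp_obj N m \<mu> g (snd (Orcl (y r))) (y r) \<le> integral\<^sup>L \<nu> f" if "\<nu> \<in> Gamma N m \<mu> g" for \<nu>
    by (rule lp_obj_le_integral_Gamma[OF that space f_measurable f_bounded g_measurable g_bounded oracle_feasible])
  note MOT = mot_value_bounds[OF hat_\<mu>(1) this]
  note LSIP = lp_value_bounds[OF cuts(1) opt oracle_feasible[of "y r"]]
  show ?thesis unfolding Let_def
    using r LSIP MOT hat_\<mu> oracle_feasible[of "y r"] by (intro exI[of _ r]) (auto simp: lp_obj_def abs_le_iff)
qed

end
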